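(* Let $A\in \mathbb{Z}^{m\times n}$ be a matrix of rank $r$ and $p$ a prime. The following are equivalent: (1) the columns of $A$ form a $p$-adic generating set for a subspace; (2) the rows of $A$ form a $p$-adic generating set for a subspace; (3) for all real vectors $x,y$, whenever $y^\top A$ and $Ax$ are integral, $y^\top Ax$ is a $p$-adic rational; (4) every elementary divisor of $A$ is a power of $p$; (5) the GCD of the subdeterminants of $A$ of order $r$ is a power of $p$; (6) there exists a matrix $B$ with $p$-adic entries such that $ABA=A$.
   Context: A $p$-adic rational is a number $a/p^k$ with $a,k\in\mathbb{Z}$, $k\ge0$; a vector or matrix is $p$-adic if all entries are $p$-adic rationals. A finite set $S$ of integral vectors is a $p$-adic generating set for a subspace if every integral vector in the linear hull of $S$ is a linear combination of the elements of $S$ with $p$-adic coefficients. The elementary divisors (invariant factors) of an integral matrix of rank $r$ are the nonzero diagonal entries $\delta_1\mid\delta_2\mid\cdots\mid\delta_r$ ($\delta_i\ge1$) of its Smith normal form. *)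

theory Defs
  imports Complex_Main "HOL-Computational_Algebra.Primes"
    "Jordan_Normal_Form.DL_Rank_Submatrix" "Jordan_Normal_Form.Determinant"
begin

definition padic_rat :: "nat \<Rightarrow> real \<Rightarrow> bool" where
  "padic_rat p x \<longleftrightarrow> (\<exists>(a::int) (k::nat). x = of_int a / (of_nat p) ^ k)"

definition integral_vec :: "real vec \<Rightarrow> bool" where
  "integral_vec z \<longleftrightarrow> (\<forall>j < dim_vec z. z $ j \<in> \<int>)"

definition lin_comb :: "nat \<Rightarrow> real vec list \<Rightarrow> (nat \<Rightarrow> real) \<Rightarrow> real vec" where
  "lin_comb d vs c = vec d (\<lambda>j. \<Sum>i<length vs. c i * (vs ! i) $ j)"

definition padic_generating :: "nat \<Rightarrow> nat \<Rightarrow> real vec list \<Rightarrow> bool" where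
  "padic_generating p d vs \<longleftrightarrow>
     (\<forall>z \<in> carrier_vec d. integral_vec z \<and> (\<exists>c. z = lin_comb d vs c) \<longrightarrow>
        (\<exists>c. (\<forall>i < length vs. padic_rat p (c i)) \<and> z = lin_comb d vs c))"

definition real_mat :: "int mat \<Rightarrow> real mat" where
  "real_mat A = map_mat real_of_int A"

definition int_rank :: "int mat \<Rightarrow> nat" where
  "int_rank A = vec_space.rank (dim_row A) (real_mat A)"

definition smith_nf_of :: "int mat \<Rightarrow> int mat \<Rightarrow> bool" where
  "smith_nf_of A D \<longleftrightarrow>
     (\<exists>P Q. P \<in> carrier_mat (dim_row A) (dim_row A) \<and> Q \<in> carrier_mat (dim_col A) (dim_col A)
        \<and> det P \<in> {1, -1} \<and> det Q \<in> {1, -1} \<and> D = P * A * Q)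
   \<and> (\<forall>i < dim_row A. \<forall>j < dim_col A. i \<noteq> j \<longrightarrow> D $$ (i, j) = 0)
   \<and> (\<exists>s \<le> min (dim_row A) (dim_col A).
        (\<forall>i < s. D $$ (i, i) > 0) \<and> (\<forall>i. s \<le> i \<and> i < min (dim_row A) (dim_col A) \<longrightarrow> D $$ (i, i) = 0)
        \<and> (\<forall>i. i + 1 < s \<longrightarrow> D $$ (i, i) dvd D $$ (i + 1, i + 1)))"

definition elementary_divisors :: "int mat \<Rightarrow> int list" where
  "elementary_divisors A =
     (let D = (SOME D. smith_nf_of A D)
      in filter (\<lambda>d. d \<noteq> 0) (map (\<lambda>i. D $$ (i, i)) [0..<min (dim_row A) (dim_col A)]))"

definition minors :: "int mat \<Rightarrow> nat \<Rightarrow> int set" where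
  "minors A k = {det (submatrix A I J) | I J. I \<subseteq> {0..<dim_row A} \<and> J \<subseteq> {0..<dim_col A}
                   \<and> card I = k \<and> card J = k}"

end

theory Submission
  imports Defs
begin

text \<open>
  Unimodular row and column operations (a Euclidean algorithm on the corner entry, then induction
  on the size) bring \<open>A\<close> to Smith normal form \<open>D = P A Q\<close>. They preserve the rank and the gcd of
  the \<open>r \<times> r\<close> minors, which for \<open>D\<close> is the product \<open>d\<^sub>1 \<cdots> d\<^sub>r\<close> of the elementary divisors;
  hence (4) and (5) agree. All other conditions are equivalent to every \<open>1 / d\<^sub>i\<close> being \<open>p\<close>-adic.
  If \<open>A = P' D Q'\<close> with \<open>P P' = 1\<close> and \<open>Q' Q = 1\<close>, the vector \<open>x = Q e\<^sub>i / d\<^sub>i\<close> has integral image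
  \<open>A x = P' e\<^sub>i\<close>; writing \<open>A x = A w\<close> with \<open>p\<close>-adic \<open>w\<close>, or pairing \<open>A x\<close> with
  \<open>y = P\<^sup>T e\<^sub>i / d\<^sub>i\<close>, exhibits \<open>1 / d\<^sub>i\<close> as a \<open>p\<close>-adic number. Conversely, if all \<open>d\<^sub>i\<close> are
  powers of \<open>p\<close>, then \<open>B = Q D\<^sup>+ P\<close> is a \<open>p\<close>-adic matrix with \<open>A B A = A\<close>, which is (6), and
  the identities \<open>z = A (B z)\<close> and \<open>y\<^sup>T A x = (A\<^sup>T y)\<^sup>T B (A x)\<close> give (1) and (3); (2) is (1)
  for \<open>A\<^sup>T\<close>, whose Smith normal form is \<open>D\<^sup>T\<close>.
\<close>

section \<open>Unimodular equivalence\<close>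

definition unimodular :: "nat \<Rightarrow> int mat \<Rightarrow> bool" where
  "unimodular n P \<longleftrightarrow> P \<in> carrier_mat n n \<and> det P \<in> {1, -1}"

lemma unimodular_one: "unimodular n (1\<^sub>m n)"
  by (simp add: unimodular_def)

lemma unimodular_mult: "unimodular n P \<Longrightarrow> unimodular n Q \<Longrightarrow> unimodular n (P * Q)"
  unfolding unimodular_def by (auto simp: det_mult)

lemma unimodular_transpose: "unimodular n P \<Longrightarrow> unimodular n P\<^sup>T"
  unfolding unimodular_def by (auto simp: det_transpose)

lemma unimodular_swaprows:
  assumes "k < n" "l < n"
  shows "unimodular n (swaprows_mat n k l)"
proof (cases "k = l")
  case True
  then have "swaprows_mat n k l = 1\<^sub>m n" using assms by (intro eq_matI) auto
  then show ?thesis by (metis unimodular_one)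
next
  case False
  then show ?thesis unfolding unimodular_def using assms det_swaprows_mat[OF _ _ False] by auto
qed

lemma unimodular_addrow: "k \<noteq> l \<Longrightarrow> unimodular n (addrow_mat n a k l)"
  unfolding unimodular_def using det_addrow_mat by auto

lemma unimodular_multrow: "k < n \<Longrightarrow> a \<in> {1, -1} \<Longrightarrow> unimodular n (multrow_mat n k a)"
  unfolding unimodular_def using det_multrow_mat by auto

lemma unimodular_inverse:
  assumes "unimodular n P"
  obtains P' where "unimodular n P'" "P' * P = 1\<^sub>m n" "P * P' = 1\<^sub>m n"
proof -
  have P: "P \<in> carrier_mat n n" and dP: "det P * det P = 1"
    using assms unfolding unimodular_def by auto
  define P' where "P' = det P \<cdot>\<^sub>m adj_mat P"
  have adj: "adj_mat P \<in> carrier_mat n n" using adj_mat[OF P] by simp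
  have P': "P' \<in> carrier_mat n n" unfolding P'_def using adj by simp
  have left: "P' * P = 1\<^sub>m n"
    unfolding P'_def mult_smult_assoc_mat[OF adj P] adj_mat(3)[OF P]
    by (rule eq_matI) (auto simp: dP)
  have right: "P * P' = 1\<^sub>m n"
    unfolding P'_def mult_smult_distrib[OF P adj] adj_mat(2)[OF P]
    by (rule eq_matI) (auto simp: dP)
  have "det P' * det P = 1" using det_mult[OF P' P] left by simp
  then have "det P' \<in> {1, -1}" using assms unfolding unimodular_def by auto
  with P' left right show ?thesis using that unfolding unimodular_def by blast
qed

lemma assoc_mult_mat_both_sides:
  assumes "P1 \<in> carrier_mat m m" "P2 \<in> carrier_mat m m" "Q1 \<in> carrier_mat n n" "Q2 \<in> carrier_mat n n"
    and "A \<in> carrier_mat m n"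
  shows "P2 * (P1 * A * Q1) * Q2 = (P2 * P1) * A * (Q1 * Q2)"
proof -
  have X: "P1 * A \<in> carrier_mat m n" "P1 * A * Q1 \<in> carrier_mat m n" "Q1 * Q2 \<in> carrier_mat n n"
    using assms by auto
  have "P2 * (P1 * A * Q1) * Q2 = P2 * ((P1 * A * Q1) * Q2)"
    by (rule assoc_mult_mat[OF assms(2) X(2) assms(4)])
  also have "(P1 * A * Q1) * Q2 = (P1 * A) * (Q1 * Q2)"
    by (rule assoc_mult_mat[OF X(1) assms(3,4)])
  also have "P2 * ((P1 * A) * (Q1 * Q2)) = (P2 * (P1 * A)) * (Q1 * Q2)"
    by (rule assoc_mult_mat[OF assms(2) X(1,3), symmetric])
  also have "P2 * (P1 * A) = (P2 * P1) * A"
    by (rule assoc_mult_mat[OF assms(2,1,5), symmetric])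
  finally show ?thesis .
qed

definition equivalent_mat :: "nat \<Rightarrow> nat \<Rightarrow> int mat \<Rightarrow> int mat \<Rightarrow> bool" where
  "equivalent_mat m n A B \<longleftrightarrow>
     A \<in> carrier_mat m n \<and> (\<exists>P Q. unimodular m P \<and> unimodular n Q \<and> B = P * A * Q)"

lemma equivalent_mat_refl: "A \<in> carrier_mat m n \<Longrightarrow> equivalent_mat m n A A"
  unfolding equivalent_mat_def using unimodular_one
  by (metis left_mult_one_mat right_mult_one_mat carrier_matD)

lemma equivalent_mat_carrier: "equivalent_mat m n A B \<Longrightarrow> B \<in> carrier_mat m n"
  unfolding equivalent_mat_def unimodular_def by auto

lemma equivalent_mat_trans:
  assumes "equivalent_mat m n A B" "equivalent_mat m n B C"
  shows "equivalent_mat m n A C"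
proof -
  obtain P1 Q1 where 1: "unimodular m P1" "unimodular n Q1" "B = P1 * A * Q1"
    and A: "A \<in> carrier_mat m n"
    using assms(1) unfolding equivalent_mat_def by auto
  obtain P2 Q2 where 2: "unimodular m P2" "unimodular n Q2" "C = P2 * B * Q2"
    using assms(2) unfolding equivalent_mat_def by auto
  have "C = (P2 * P1) * A * (Q1 * Q2)"
    unfolding 2(3) 1(3) using 1 2 A by (intro assoc_mult_mat_both_sides) (auto simp: unimodular_def)
  then show ?thesis unfolding equivalent_mat_def using A 1 2 unimodular_mult by blast
qed

lemma equivalent_mat_mult_left:
  "A \<in> carrier_mat m n \<Longrightarrow> unimodular m P \<Longrightarrow> equivalent_mat m n A (P * A)"
  unfolding equivalent_mat_def using unimodular_one
  by (metis right_mult_one_mat mult_carrier_mat unimodular_def)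

lemma equivalent_mat_transpose:
  assumes "equivalent_mat m n A B"
  shows "equivalent_mat n m A\<^sup>T B\<^sup>T"
proof -
  obtain P Q where PQ: "unimodular m P" "unimodular n Q" "B = P * A * Q"
    and A: "A \<in> carrier_mat m n"
    using assms unfolding equivalent_mat_def by auto
  have "P \<in> carrier_mat m m" "Q \<in> carrier_mat n n" using PQ unfolding unimodular_def by auto
  then have "B\<^sup>T = Q\<^sup>T * A\<^sup>T * P\<^sup>T" unfolding PQ(3) using A
    by (simp add: transpose_mult[of _ m n _ n] transpose_mult[of _ m m _ n] assoc_mult_mat[of _ n m _ m])
  then show ?thesis unfolding equivalent_mat_def using A PQ unimodular_transpose by auto
qed

lemma equivalent_mat_inverse:
  assumes "equivalent_mat m n A D"
  obtains P Q P' Q' where "unimodular m P" "unimodular n Q" "unimodular m P'" "unimodular n Q'"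
    "D = P * A * Q" "A = P' * D * Q'" "P * P' = 1\<^sub>m m" "Q' * Q = 1\<^sub>m n"
proof -
  obtain P Q where PQ: "unimodular m P" "unimodular n Q" "D = P * A * Q"
    and A: "A \<in> carrier_mat m n"
    using assms unfolding equivalent_mat_def by auto
  obtain P' where P': "unimodular m P'" "P' * P = 1\<^sub>m m" "P * P' = 1\<^sub>m m"
    using unimodular_inverse[OF PQ(1)] by auto
  obtain Q' where Q': "unimodular n Q'" "Q' * Q = 1\<^sub>m n" "Q * Q' = 1\<^sub>m n"
    using unimodular_inverse[OF PQ(2)] by auto
  have "P' * D * Q' = (P' * P) * A * (Q * Q')" unfolding PQ(3)
    using PQ P' Q' A by (intro assoc_mult_mat_both_sides) (auto simp: unimodular_def)
  also have "\<dots> = A" using P' Q' A by simp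
  finally show ?thesis using that[OF PQ(1,2) P'(1) Q'(1) PQ(3) _ P'(3) Q'(2)] by simp
qed

lemma equivalent_mat_sym:
  assumes "equivalent_mat m n A D"
  shows "equivalent_mat m n D A"
proof -
  obtain P Q P' Q' where "unimodular m P'" "unimodular n Q'" "A = P' * D * Q'"
    using equivalent_mat_inverse[OF assms] .
  then show ?thesis using equivalent_mat_carrier[OF assms] unfolding equivalent_mat_def by blast
qed

section \<open>Existence of the Smith normal form\<close>

lemma index_mult_mat_sum:
  "A \<in> carrier_mat m k \<Longrightarrow> B \<in> carrier_mat k n \<Longrightarrow> i < m \<Longrightarrow> j < n \<Longrightarrow>
   (A * B) $$ (i, j) = (\<Sum>l<k. A $$ (i, l) * B $$ (l, j))"
  by (simp add: scalar_prod_def atLeast0LessThan)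

lemma dvd_entries_mult_left:
  fixes c :: int
  assumes "P \<in> carrier_mat m m'" "X \<in> carrier_mat m' n" "\<forall>i<m'. \<forall>j<n. c dvd X $$ (i, j)"
  shows "\<forall>i<m. \<forall>j<n. c dvd (P * X) $$ (i, j)"
proof (intro allI impI)
  fix i j assume ij: "i < m" "j < n"
  have "c dvd (\<Sum>l<m'. P $$ (i, l) * X $$ (l, j))" using assms(3) ij by (auto intro!: dvd_sum dvd_mult)
  then show "c dvd (P * X) $$ (i, j)" using index_mult_mat_sum[OF assms(1,2) ij] by simp
qed

lemma dvd_entries_mult_right:
  fixes c :: int
  assumes "X \<in> carrier_mat m n'" "Q \<in> carrier_mat n' n" "\<forall>i<m. \<forall>j<n'. c dvd X $$ (i, j)"
  shows "\<forall>i<m. \<forall>j<n. c dvd (X * Q) $$ (i, j)"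
proof (intro allI impI)
  fix i j assume ij: "i < m" "j < n"
  have "c dvd (\<Sum>l<n'. X $$ (i, l) * Q $$ (l, j))" using assms(3) ij by (auto intro!: dvd_sum dvd_mult2)
  then show "c dvd (X * Q) $$ (i, j)" using index_mult_mat_sum[OF assms(1,2) ij] by simp
qed

lemma corner_reduce_col:
  assumes A: "A \<in> carrier_mat m n" and n: "0 < n" and i: "i < m" and a: "A $$ (0, 0) \<noteq> 0"
    and nd: "\<not> A $$ (0, 0) dvd A $$ (i, 0)"
  shows "\<exists>B. equivalent_mat m n A B \<and> B $$ (0, 0) \<noteq> 0 \<and> \<bar>B $$ (0, 0)\<bar> < \<bar>A $$ (0, 0)\<bar>"
proof -
  define c where "c = - (A $$ (i, 0) div A $$ (0, 0))"
  have m0: "0 < m" using i by auto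
  have i0: "i \<noteq> 0" using nd by (metis dvd_refl)
  define B where "B = swaprows_mat m 0 i * (addrow_mat m c i 0 * A)"
  have X: "addrow_mat m c i 0 * A \<in> carrier_mat m n" by (rule mult_carrier_mat[OF addrow_mat_carrier A])
  have "B = swaprows 0 i (addrow c i 0 A)"
    unfolding B_def by (simp only: addrow_mat[OF A m0] swaprows_mat[OF X m0 i])
  then have "B $$ (0, 0) = c * A $$ (0, 0) + A $$ (i, 0)" using A i m0 n by simp
  also have "\<dots> = A $$ (i, 0) mod A $$ (0, 0)" unfolding c_def by (simp add: minus_div_mult_eq_mod[symmetric])
  finally have B00: "B $$ (0, 0) = A $$ (i, 0) mod A $$ (0, 0)" .
  have "equivalent_mat m n A B" unfolding B_def
    using equivalent_mat_trans[OF equivalent_mat_mult_left[OF A unimodular_addrow[OF i0]]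
        equivalent_mat_mult_left[OF X unimodular_swaprows[OF m0 i]]] .
  moreover have "B $$ (0, 0) \<noteq> 0" using nd unfolding B00 by (simp add: dvd_eq_mod_eq_0)
  moreover have "\<bar>B $$ (0, 0)\<bar> < \<bar>A $$ (0, 0)\<bar>" unfolding B00 using a abs_mod_less by blast
  ultimately show ?thesis by blast
qed

lemma corner_reduce_row:
  assumes A: "A \<in> carrier_mat m n" and m: "0 < m" and j: "j < n" and a: "A $$ (0, 0) \<noteq> 0"
    and nd: "\<not> A $$ (0, 0) dvd A $$ (0, j)"
  shows "\<exists>B. equivalent_mat m n A B \<and> B $$ (0, 0) \<noteq> 0 \<and> \<bar>B $$ (0, 0)\<bar> < \<bar>A $$ (0, 0)\<bar>"
proof -
  have At: "A\<^sup>T \<in> carrier_mat n m" using A by auto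
  have "A\<^sup>T $$ (0, 0) = A $$ (0, 0)" "A\<^sup>T $$ (j, 0) = A $$ (0, j)" using A m j by auto
  then obtain B where B: "equivalent_mat n m A\<^sup>T B" "B $$ (0, 0) \<noteq> 0" "\<bar>B $$ (0, 0)\<bar> < \<bar>A $$ (0, 0)\<bar>"
    using corner_reduce_col[OF At m j] a nd by auto
  have "B \<in> carrier_mat n m" using equivalent_mat_carrier[OF B(1)] .
  then have "B\<^sup>T $$ (0, 0) = B $$ (0, 0)" using m j by auto
  moreover have "equivalent_mat m n A B\<^sup>T" using equivalent_mat_transpose[OF B(1)] by simp
  ultimately show ?thesis using B by auto
qed

text \<open>If the corner divides its row and column but not the entry \<open>(i, j)\<close>, adding row \<open>i\<close>
  (cleared in column \<open>0\<close>) to row \<open>0\<close> moves that entry into the first row.\<close>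

lemma corner_reduce_inner:
  assumes A: "A \<in> carrier_mat m n" and i: "i < m" and j: "j < n" and a: "A $$ (0, 0) \<noteq> 0"
    and dc: "\<forall>i<m. A $$ (0, 0) dvd A $$ (i, 0)" and dr: "\<forall>j<n. A $$ (0, 0) dvd A $$ (0, j)"
    and nd: "\<not> A $$ (0, 0) dvd A $$ (i, j)"
  shows "\<exists>B. equivalent_mat m n A B \<and> B $$ (0, 0) \<noteq> 0 \<and> \<bar>B $$ (0, 0)\<bar> < \<bar>A $$ (0, 0)\<bar>"
proof -
  define c where "c = - (A $$ (i, 0) div A $$ (0, 0))"
  have m0: "0 < m" using i by auto
  have i0: "i \<noteq> 0" using nd dr j by metis
  define A2 where "A2 = addrow_mat m 1 0 i * (addrow_mat m c i 0 * A)"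
  have X: "addrow_mat m c i 0 * A \<in> carrier_mat m n" by (rule mult_carrier_mat[OF addrow_mat_carrier A])
  have A2: "A2 = addrow 1 0 i (addrow c i 0 A)"
    unfolding A2_def by (simp only: addrow_mat[OF A m0] addrow_mat[OF X i])
  obtain k where k: "A $$ (i, 0) = A $$ (0, 0) * k" using dc i by (auto elim: dvdE)
  then have "c = - k" using a by (simp add: c_def)
  then have A200: "A2 $$ (0, 0) = A $$ (0, 0)"
    using A i m0 j i0 k unfolding A2 by (simp add: algebra_simps)
  have "A2 $$ (0, j) = (c * A $$ (0, j) + A $$ (i, j)) + A $$ (0, j)"
    using A i m0 j i0 unfolding A2 by simp
  then have nd2: "\<not> A2 $$ (0, 0) dvd A2 $$ (0, j)" unfolding A200 using nd dr j
    by (metis dvd_add_left_iff dvd_add_right_iff dvd_mult)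
  have eq: "equivalent_mat m n A A2" unfolding A2_def
    using equivalent_mat_trans[OF equivalent_mat_mult_left[OF A unimodular_addrow[OF i0]]
        equivalent_mat_mult_left[OF X unimodular_addrow[of 0 i m 1]]] i0 by auto
  obtain B where "equivalent_mat m n A2 B" "B $$ (0, 0) \<noteq> 0" "\<bar>B $$ (0, 0)\<bar> < \<bar>A2 $$ (0, 0)\<bar>"
    using corner_reduce_row[OF equivalent_mat_carrier[OF eq] m0 j] nd2 A200 a by auto
  then show ?thesis using equivalent_mat_trans[OF eq] A200 by auto
qed

lemma corner_reduce:
  assumes A: "A \<in> carrier_mat m n" and i: "i < m" and j: "j < n" and a: "A $$ (0, 0) \<noteq> 0"
    and nd: "\<not> A $$ (0, 0) dvd A $$ (i, j)"
  shows "\<exists>B. equivalent_mat m n A B \<and> B $$ (0, 0) \<noteq> 0 \<and> \<bar>B $$ (0, 0)\<bar> < \<bar>A $$ (0, 0)\<bar>"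
proof (cases "\<forall>i<m. A $$ (0, 0) dvd A $$ (i, 0)")
  case False
  then show ?thesis using corner_reduce_col[OF A _ _ a] j by auto
next
  case dc: True
  show ?thesis
  proof (cases "\<forall>j<n. A $$ (0, 0) dvd A $$ (0, j)")
    case False
    then show ?thesis using corner_reduce_row[OF A _ _ a] i by auto
  next
    case True
    show ?thesis using corner_reduce_inner[OF A i j a dc True nd] .
  qed
qed

lemma corner_dvd_all:
  "A \<in> carrier_mat m n \<Longrightarrow> A $$ (0, 0) \<noteq> 0 \<Longrightarrow>
   \<exists>B. equivalent_mat m n A B \<and> B $$ (0, 0) \<noteq> 0 \<and> (\<forall>i<m. \<forall>j<n. B $$ (0, 0) dvd B $$ (i, j))"
proof (induction "nat \<bar>A $$ (0, 0)\<bar>" arbitrary: A rule: less_induct)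
  case less
  show ?case
  proof (cases "\<forall>i<m. \<forall>j<n. A $$ (0, 0) dvd A $$ (i, j)")
    case True
    then show ?thesis using equivalent_mat_refl[OF less.prems(1)] less.prems by blast
  next
    case False
    then obtain i j where ij: "i < m" "j < n" "\<not> A $$ (0, 0) dvd A $$ (i, j)" by auto
    obtain B where B: "equivalent_mat m n A B" "B $$ (0, 0) \<noteq> 0" "\<bar>B $$ (0, 0)\<bar> < \<bar>A $$ (0, 0)\<bar>"
      using corner_reduce[OF less.prems(1) ij(1,2) less.prems(2) ij(3)] by auto
    then have "nat \<bar>B $$ (0, 0)\<bar> < nat \<bar>A $$ (0, 0)\<bar>" by simp
    from less.hyps[OF this equivalent_mat_carrier[OF B(1)] B(2)] B(1) show ?thesis
      using equivalent_mat_trans by blast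
  qed
qed

lemma clear_first_col:
  assumes B: "B \<in> carrier_mat m n" and m0: "0 < m" and n0: "0 < n"
    and dv: "\<forall>i<m. \<forall>j<n. B $$ (0, 0) dvd B $$ (i, j)"
  shows "\<exists>C. equivalent_mat m n B C \<and> (\<forall>j<n. C $$ (0, j) = B $$ (0, j))
     \<and> (\<forall>i. 0 < i \<longrightarrow> i < m \<longrightarrow> C $$ (i, 0) = 0) \<and> (\<forall>i<m. \<forall>j<n. B $$ (0, 0) dvd C $$ (i, j))"
proof -
  define q where "q i = B $$ (i, 0) div B $$ (0, 0)" for i
  define L where "L = mat m m (\<lambda>(i, k). if k = i then 1 else if k = 0 then - q i else (0::int))"
  have L: "L \<in> carrier_mat m m" unfolding L_def by simp
  have "det L = prod_list (diag_mat L)"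
    by (rule det_lower_triangular[OF _ L]) (auto simp: L_def)
  also have "diag_mat L = map (\<lambda>i. 1) [0..<m]"
    unfolding diag_mat_def using L by (intro map_cong) (auto simp: L_def)
  also have "prod_list (map (\<lambda>i. 1::int) [0..<m]) = 1" by (simp add: map_replicate_const)
  finally have "unimodular m L" using L unfolding unimodular_def by simp
  then have eq: "equivalent_mat m n B (L * B)" using equivalent_mat_mult_left[OF B] by auto
  have entry: "(L * B) $$ (i, j) = B $$ (i, j) - (if i = 0 then 0 else q i * B $$ (0, j))"
    if ij: "i < m" "j < n" for i j
  proof -
    have "(L * B) $$ (i, j) = (\<Sum>l<m. (if l = i then B $$ (l, j) else 0)
        - (if l = 0 \<and> i \<noteq> 0 then q i * B $$ (0, j) else 0))"
      unfolding index_mult_mat_sum[OF L B ij] by (rule sum.cong) (auto simp: L_def ij)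
    then show ?thesis using ij m0 by (simp add: sum_subtractf)
  qed
  have "(L * B) $$ (i, 0) = 0" if "0 < i" "i < m" for i
    using entry[OF that(2) n0] that dv n0 by (simp add: q_def)
  moreover have "\<forall>i<m. \<forall>j<n. B $$ (0, 0) dvd (L * B) $$ (i, j)"
    using entry dv m0 by auto
  ultimately show ?thesis using eq entry[OF m0] by auto
qed

lemma clear_first_row_col:
  assumes B: "B \<in> carrier_mat m n" and b: "B $$ (0, 0) \<noteq> 0" and m0: "0 < m" and n0: "0 < n"
    and dv: "\<forall>i<m. \<forall>j<n. B $$ (0, 0) dvd B $$ (i, j)"
  shows "\<exists>C. equivalent_mat m n B C \<and> C $$ (0, 0) > 0 \<and> (\<forall>i. 0 < i \<longrightarrow> i < m \<longrightarrow> C $$ (i, 0) = 0)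
     \<and> (\<forall>j. 0 < j \<longrightarrow> j < n \<longrightarrow> C $$ (0, j) = 0) \<and> (\<forall>i<m. \<forall>j<n. C $$ (0, 0) dvd C $$ (i, j))"
proof -
  obtain C1 where C1: "equivalent_mat m n B C1" "\<forall>j<n. C1 $$ (0, j) = B $$ (0, j)"
    "\<forall>i. 0 < i \<longrightarrow> i < m \<longrightarrow> C1 $$ (i, 0) = 0" "\<forall>i<m. \<forall>j<n. B $$ (0, 0) dvd C1 $$ (i, j)"
    using clear_first_col[OF B m0 n0 dv] by blast
  have C1c: "C1 \<in> carrier_mat m n" using equivalent_mat_carrier[OF C1(1)] .
  have T: "C1\<^sup>T \<in> carrier_mat n m" using C1c by auto
  have T00: "C1\<^sup>T $$ (0, 0) = B $$ (0, 0)" using C1 C1c m0 n0 by auto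
  have Tdv: "\<forall>i<n. \<forall>j<m. C1\<^sup>T $$ (0, 0) dvd C1\<^sup>T $$ (i, j)" using C1(4) C1c T00 by auto
  obtain C2 where C2: "equivalent_mat n m C1\<^sup>T C2" "\<forall>j<m. C2 $$ (0, j) = C1\<^sup>T $$ (0, j)"
    "\<forall>i. 0 < i \<longrightarrow> i < n \<longrightarrow> C2 $$ (i, 0) = 0" "\<forall>i<n. \<forall>j<m. C1\<^sup>T $$ (0, 0) dvd C2 $$ (i, j)"
    using clear_first_col[OF T n0 m0 Tdv] by blast
  have C2c: "C2 \<in> carrier_mat n m" using equivalent_mat_carrier[OF C2(1)] .
  have "equivalent_mat m n C1 C2\<^sup>T" using equivalent_mat_transpose[OF C2(1)] by simp
  then have e3: "equivalent_mat m n B C2\<^sup>T" using equivalent_mat_trans[OF C1(1)] by blast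
  define sg where "sg = sgn (B $$ (0, 0))"
  have sg: "sg \<in> {1, -1}" using b by (auto simp: sg_def sgn_if)
  define C where "C = multrow_mat m 0 sg * C2\<^sup>T"
  have C: "C = multrow 0 sg C2\<^sup>T" unfolding C_def using C2c by (simp add: multrow_mat)
  have "equivalent_mat m n B C" unfolding C_def
    using equivalent_mat_trans[OF e3 equivalent_mat_mult_left[OF _ unimodular_multrow[OF m0 sg]]] C2c
    by simp
  moreover have C00: "C $$ (0, 0) = \<bar>B $$ (0, 0)\<bar>"
    unfolding C using C2 C2c m0 n0 T00 by (simp add: sg_def abs_sgn)
  moreover have "\<forall>i. 0 < i \<longrightarrow> i < m \<longrightarrow> C $$ (i, 0) = 0"
    unfolding C using C2 C2c C1 C1c n0 by simp
  moreover have "\<forall>j. 0 < j \<longrightarrow> j < n \<longrightarrow> C $$ (0, j) = 0"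
    unfolding C using C2 C2c m0 by simp
  moreover have "\<forall>i<m. \<forall>j<n. C $$ (0, 0) dvd C $$ (i, j)"
    unfolding C00 unfolding C using C2 C2c T00 by simp
  ultimately show ?thesis using b by auto
qed

lemma swaprows_corner:
  assumes A: "A \<in> carrier_mat m n" and i: "i < m" and j: "j < n"
  shows "(swaprows_mat m 0 i * A * swaprows_mat n 0 j) $$ (0, 0) = A $$ (i, j)"
proof -
  have m0: "0 < m" and n0: "0 < n" using i j by auto
  have X: "swaprows_mat m 0 i * A \<in> carrier_mat m n" by (rule mult_carrier_mat[OF swaprows_mat_carrier A])
  have "(swaprows_mat m 0 i * A * swaprows_mat n 0 j) $$ (0, 0) =
     (\<Sum>l<n. (swaprows_mat m 0 i * A) $$ (0, l) * swaprows_mat n 0 j $$ (l, 0))"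
    by (rule index_mult_mat_sum[OF X swaprows_mat_carrier m0 n0])
  also have "\<dots> = (\<Sum>l<n. if l = j then (swaprows_mat m 0 i * A) $$ (0, l) else 0)"
    by (rule sum.cong) (auto simp: n0)
  also have "\<dots> = A $$ (i, j)" using j A i m0 unfolding swaprows_mat[OF A m0 i, symmetric] by simp
  finally show ?thesis .
qed

lemma corner_normal_form:
  assumes A: "A \<in> carrier_mat m n" and i: "i < m" and j: "j < n" and a: "A $$ (i, j) \<noteq> 0"
  shows "\<exists>C. equivalent_mat m n A C \<and> C $$ (0, 0) > 0 \<and> (\<forall>i. 0 < i \<longrightarrow> i < m \<longrightarrow> C $$ (i, 0) = 0)
     \<and> (\<forall>j. 0 < j \<longrightarrow> j < n \<longrightarrow> C $$ (0, j) = 0) \<and> (\<forall>i<m. \<forall>j<n. C $$ (0, 0) dvd C $$ (i, j))"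
proof -
  define A1 where "A1 = swaprows_mat m 0 i * A * swaprows_mat n 0 j"
  have e1: "equivalent_mat m n A A1" unfolding A1_def equivalent_mat_def
    using A unimodular_swaprows[of 0 m i] unimodular_swaprows[of 0 n j] i j by blast
  have "A1 $$ (0, 0) \<noteq> 0" unfolding A1_def using swaprows_corner[OF A i j] a by simp
  then obtain B where B: "equivalent_mat m n A1 B" "B $$ (0, 0) \<noteq> 0"
    "\<forall>i<m. \<forall>j<n. B $$ (0, 0) dvd B $$ (i, j)"
    using corner_dvd_all[OF equivalent_mat_carrier[OF e1]] by auto
  have m0: "0 < m" and n0: "0 < n" using i j by auto
  obtain C where "equivalent_mat m n B C" "C $$ (0, 0) > 0" "\<forall>i. 0 < i \<longrightarrow> i < m \<longrightarrow> C $$ (i, 0) = 0"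
    "\<forall>j. 0 < j \<longrightarrow> j < n \<longrightarrow> C $$ (0, j) = 0" "\<forall>i<m. \<forall>j<n. C $$ (0, 0) dvd C $$ (i, j)"
    using clear_first_row_col[OF equivalent_mat_carrier[OF B(1)] B(2) m0 n0 B(3)] by blast
  moreover have "equivalent_mat m n A C"
    using equivalent_mat_trans[OF equivalent_mat_trans[OF e1 B(1)] \<open>equivalent_mat m n B C\<close>] .
  ultimately show ?thesis by blast
qed

lemma equivalent_mat_four_block:
  assumes e: "equivalent_mat m n C D" and c: "c \<in> carrier_mat 1 1"
  shows "equivalent_mat (Suc m) (Suc n) (four_block_mat c (0\<^sub>m 1 n) (0\<^sub>m m 1) C)
    (four_block_mat c (0\<^sub>m 1 n) (0\<^sub>m m 1) D)"
proof -
  obtain P Q where PQ: "unimodular m P" "unimodular n Q" "D = P * C * Q" and C: "C \<in> carrier_mat m n"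
    using e unfolding equivalent_mat_def by auto
  have Pc: "P \<in> carrier_mat m m" and Qc: "Q \<in> carrier_mat n n"
    using PQ unfolding unimodular_def by auto
  define P1 where "P1 = four_block_mat (1\<^sub>m 1) (0\<^sub>m 1 m) (0\<^sub>m m 1) P"
  define Q1 where "Q1 = four_block_mat (1\<^sub>m 1) (0\<^sub>m 1 n) (0\<^sub>m n 1) Q"
  have "det P1 = det (1\<^sub>m 1) * det P" unfolding P1_def
    by (rule det_four_block_mat_upper_right_zero[OF one_carrier_mat refl zero_carrier_mat Pc])
  then have uP: "unimodular (Suc m) P1" using PQ(1) Pc unfolding unimodular_def P1_def by auto
  have "det Q1 = det (1\<^sub>m 1) * det Q" unfolding Q1_def
    by (rule det_four_block_mat_upper_right_zero[OF one_carrier_mat refl zero_carrier_mat Qc])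
  then have uQ: "unimodular (Suc n) Q1" using PQ(2) Qc unfolding unimodular_def Q1_def by auto
  have "P1 * four_block_mat c (0\<^sub>m 1 n) (0\<^sub>m m 1) C = four_block_mat c (0\<^sub>m 1 n) (0\<^sub>m m 1) (P * C)"
    unfolding P1_def by (subst mult_four_block_mat[of _ 1 1 _ m _ m _ _ 1 _ n]) (use c C Pc in auto)
  moreover have "four_block_mat c (0\<^sub>m 1 n) (0\<^sub>m m 1) (P * C) * Q1 = four_block_mat c (0\<^sub>m 1 n) (0\<^sub>m m 1) D"
    unfolding Q1_def PQ(3) by (subst mult_four_block_mat[of _ 1 1 _ n _ m _ _ 1 _ n]) (use c C Pc Qc in auto)
  ultimately have "P1 * four_block_mat c (0\<^sub>m 1 n) (0\<^sub>m m 1) C * Q1 = four_block_mat c (0\<^sub>m 1 n) (0\<^sub>m m 1) D"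
    by simp
  moreover have "four_block_mat c (0\<^sub>m 1 n) (0\<^sub>m m 1) C \<in> carrier_mat (Suc m) (Suc n)"
    using c C by auto
  ultimately show ?thesis unfolding equivalent_mat_def using uP uQ by metis
qed

definition diagonal_form :: "nat \<Rightarrow> nat \<Rightarrow> nat \<Rightarrow> int mat \<Rightarrow> bool" where
  "diagonal_form m n s D \<longleftrightarrow> D \<in> carrier_mat m n \<and> (\<forall>i<m. \<forall>j<n. i \<noteq> j \<longrightarrow> D $$ (i, j) = 0)
     \<and> s \<le> min m n \<and> (\<forall>i<s. D $$ (i, i) > 0) \<and> (\<forall>i. s \<le> i \<and> i < min m n \<longrightarrow> D $$ (i, i) = 0)"

lemma diagonal_form_transpose: "diagonal_form m n s D \<Longrightarrow> diagonal_form n m s D\<^sup>T"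
  unfolding diagonal_form_def by auto

definition smith_form :: "nat \<Rightarrow> nat \<Rightarrow> nat \<Rightarrow> int mat \<Rightarrow> bool" where
  "smith_form m n s D \<longleftrightarrow> diagonal_form m n s D \<and> (\<forall>i. Suc i < s \<longrightarrow> D $$ (i, i) dvd D $$ (Suc i, Suc i))"

lemma equivalent_mat_dvd_entries:
  assumes "equivalent_mat m n A B" "\<forall>i<m. \<forall>j<n. c dvd A $$ (i, j)"
  shows "\<forall>i<m. \<forall>j<n. c dvd B $$ (i, j)"
proof -
  obtain P Q where "unimodular m P" "unimodular n Q" "B = P * A * Q" and A: "A \<in> carrier_mat m n"
    using assms(1) unfolding equivalent_mat_def by auto
  then show ?thesis
    using assms(2) dvd_entries_mult_left[of P m m A n c] dvd_entries_mult_right[of "P * A" m n Q n c]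
    unfolding unimodular_def by auto
qed

lemma smith_form_four_block:
  assumes c: "c > 0" and D: "smith_form m n s D" and dv: "\<forall>i<m. \<forall>j<n. c dvd D $$ (i, j)"
  shows "smith_form (Suc m) (Suc n) (Suc s) (four_block_mat (mat 1 1 (\<lambda>_. c)) (0\<^sub>m 1 n) (0\<^sub>m m 1) D)"
    (is "smith_form _ _ _ ?E")
proof -
  have Dc: "D \<in> carrier_mat m n" and s: "s \<le> min m n" using D unfolding smith_form_def diagonal_form_def by auto
  have E: "?E $$ (i, j) = (if i = 0 \<and> j = 0 then c else if i = 0 \<or> j = 0 then 0 else D $$ (i - 1, j - 1))"
    if "i < Suc m" "j < Suc n" for i j
    using that Dc by auto
  have off: "\<forall>i<m. \<forall>j<n. i \<noteq> j \<longrightarrow> D $$ (i, j) = 0" and pos: "\<forall>i<s. D $$ (i, i) > 0"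
    and zero: "\<forall>i. s \<le> i \<and> i < min m n \<longrightarrow> D $$ (i, i) = 0"
    and chain: "\<forall>i. Suc i < s \<longrightarrow> D $$ (i, i) dvd D $$ (Suc i, Suc i)"
    using D unfolding smith_form_def diagonal_form_def by auto
  show ?thesis unfolding smith_form_def diagonal_form_def
  proof (intro conjI allI impI)
    show "?E \<in> carrier_mat (Suc m) (Suc n)" using Dc by auto
    show "Suc s \<le> min (Suc m) (Suc n)" using s by simp
    fix i
    show "?E $$ (i, j) = 0" if "i < Suc m" "j < Suc n" "i \<noteq> j" for j
      using E[OF that(1,2)] that off by (cases i; cases j) auto
    show "?E $$ (i, i) > 0" if "i < Suc s"
      using E[of i i] that pos c s by (cases i) auto
    show "?E $$ (i, i) = 0" if "Suc s \<le> i \<and> i < min (Suc m) (Suc n)"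
      using E[of i i] that zero by (cases i) auto
    show "?E $$ (i, i) dvd ?E $$ (Suc i, Suc i)" if "Suc i < Suc s"
      using E[of i i] E[of "Suc i" "Suc i"] that chain dv s by (cases i) auto
  qed
qed

lemma smith_form_exists:
  "A \<in> carrier_mat m n \<Longrightarrow> \<exists>D s. equivalent_mat m n A D \<and> smith_form m n s D"
proof (induction m arbitrary: n A)
  case 0
  then have "smith_form 0 n 0 A" unfolding smith_form_def diagonal_form_def by auto
  then show ?case using equivalent_mat_refl[OF "0.prems"] by blast
next
  case (Suc m)
  show ?case
  proof (cases "\<exists>i<Suc m. \<exists>j<n. A $$ (i, j) \<noteq> 0")
    case False
    then have "smith_form (Suc m) n 0 A" using Suc.prems unfolding smith_form_def diagonal_form_def by auto
    then show ?thesis using equivalent_mat_refl[OF Suc.prems] by blast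
  next
    case True
    then obtain i j where ij: "i < Suc m" "j < n" "A $$ (i, j) \<noteq> 0" by auto
    then obtain n' where n: "n = Suc n'" by (cases n) auto
    obtain C where C: "equivalent_mat (Suc m) n A C" "C $$ (0, 0) > 0"
      "\<forall>i. 0 < i \<longrightarrow> i < Suc m \<longrightarrow> C $$ (i, 0) = 0" "\<forall>j. 0 < j \<longrightarrow> j < n \<longrightarrow> C $$ (0, j) = 0"
      "\<forall>i<Suc m. \<forall>j<n. C $$ (0, 0) dvd C $$ (i, j)"
      using corner_normal_form[OF Suc.prems ij] by blast
    have Cc: "C \<in> carrier_mat (Suc m) (Suc n')" using equivalent_mat_carrier[OF C(1)] n by simp
    define c where "c = C $$ (0, 0)"
    define C' where "C' = mat m n' (\<lambda>(i, j). C $$ (i + 1, j + 1))"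
    have C': "C' \<in> carrier_mat m n'" unfolding C'_def by simp
    have block: "C = four_block_mat (mat 1 1 (\<lambda>_. c)) (0\<^sub>m 1 n') (0\<^sub>m m 1) C'"
      by (rule eq_matI) (use Cc C(3,4) in \<open>auto simp: C'_def c_def n\<close>)
    obtain D' s' where D': "equivalent_mat m n' C' D'" "smith_form m n' s' D'"
      using Suc.IH[OF C'] by blast
    have "\<forall>i<m. \<forall>j<n'. c dvd C' $$ (i, j)" using C(5) unfolding C'_def c_def n by auto
    then have "\<forall>i<m. \<forall>j<n'. c dvd D' $$ (i, j)" using equivalent_mat_dvd_entries[OF D'(1)] by blast
    then have "smith_form (Suc m) n (Suc s') (four_block_mat (mat 1 1 (\<lambda>_. c)) (0\<^sub>m 1 n') (0\<^sub>m m 1) D')"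
      using smith_form_four_block[OF _ D'(2)] C(2) n by (simp add: c_def)
    moreover have "equivalent_mat (Suc m) n A (four_block_mat (mat 1 1 (\<lambda>_. c)) (0\<^sub>m 1 n') (0\<^sub>m m 1) D')"
      using equivalent_mat_trans[OF C(1)] equivalent_mat_four_block[OF D'(1)] block n by simp
    ultimately show ?thesis by blast
  qed
qed

lemma smith_nf_of_exists:
  assumes "A \<in> carrier_mat m n"
  shows "\<exists>D. smith_nf_of A D"
proof -
  obtain D s where "equivalent_mat m n A D" "smith_form m n s D" using smith_form_exists[OF assms] by blast
  then show ?thesis unfolding smith_nf_of_def equivalent_mat_def smith_form_def diagonal_form_def unimodular_def
    using assms by (intro exI[of _ D]) auto
qed

lemma smith_nf_of_diagonal_form:
  assumes A: "A \<in> carrier_mat m n" and S: "smith_nf_of A D"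
  obtains s where "equivalent_mat m n A D" "diagonal_form m n s D"
proof -
  obtain P Q where "P \<in> carrier_mat m m" "Q \<in> carrier_mat n n" "det P \<in> {1, -1}" "det Q \<in> {1, -1}"
    "D = P * A * Q"
    using S A unfolding smith_nf_of_def by auto
  then have e: "equivalent_mat m n A D" unfolding equivalent_mat_def unimodular_def using A by blast
  obtain s where "s \<le> min m n" "\<forall>i<s. D $$ (i, i) > 0" "\<forall>i. s \<le> i \<and> i < min m n \<longrightarrow> D $$ (i, i) = 0"
    using S A unfolding smith_nf_of_def by auto
  moreover have "\<forall>i<m. \<forall>j<n. i \<noteq> j \<longrightarrow> D $$ (i, j) = 0" using S A unfolding smith_nf_of_def by auto
  ultimately have "diagonal_form m n s D"
    unfolding diagonal_form_def using equivalent_mat_carrier[OF e] by auto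
  then show ?thesis using that e by blast
qed

lemma elementary_divisors_diagonal_form:
  assumes A: "A \<in> carrier_mat m n"
  obtains D s where "equivalent_mat m n A D" "diagonal_form m n s D"
    "set (elementary_divisors A) = {D $$ (i, i) | i. i < s}"
proof -
  define D where "D = (SOME D. smith_nf_of A D)"
  have "smith_nf_of A D" unfolding D_def using smith_nf_of_exists[OF A] by (rule someI_ex)
  then obtain s where e: "equivalent_mat m n A D" and d: "diagonal_form m n s D"
    using smith_nf_of_diagonal_form[OF A] by blast
  have s: "s \<le> min m n" and pos: "\<forall>i<s. D $$ (i, i) > 0"
    and zero: "\<forall>i. s \<le> i \<and> i < min m n \<longrightarrow> D $$ (i, i) = 0"
    using d unfolding diagonal_form_def by auto
  have "set (elementary_divisors A) = {x \<in> (\<lambda>i. D $$ (i, i)) ` {0..<min m n}. x \<noteq> 0}"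
    unfolding elementary_divisors_def Let_def D_def[symmetric] using A by auto
  also have "\<dots> = {D $$ (i, i) | i. i < s}"
  proof (intro equalityI subsetI)
    fix x assume "x \<in> {x \<in> (\<lambda>i. D $$ (i, i)) ` {0..<min m n}. x \<noteq> 0}"
    then obtain i where i: "i < min m n" "x = D $$ (i, i)" "x \<noteq> 0" by auto
    then have "i < s" using zero by (metis not_le)
    then show "x \<in> {D $$ (i, i) | i. i < s}" using i by auto
  next
    fix x assume "x \<in> {D $$ (i, i) | i. i < s}"
    then obtain i where "i < s" "x = D $$ (i, i)" by auto
    then show "x \<in> {x \<in> (\<lambda>i. D $$ (i, i)) ` {0..<min m n}. x \<noteq> 0}" using s pos by force
  qed
  finally show ?thesis using that e d by blast
qed

section \<open>Determinantal divisors\<close>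

lemma Collect_less_in_subset: "I \<subseteq> {0..<k} \<Longrightarrow> {i. i < k \<and> i \<in> I} = I"
  by auto

lemma submatrix_carrier:
  "A \<in> carrier_mat m n \<Longrightarrow> I \<subseteq> {0..<m} \<Longrightarrow> J \<subseteq> {0..<n} \<Longrightarrow>
   submatrix A I J \<in> carrier_mat (card I) (card J)"
  by (intro carrier_matI) (auto simp: dim_submatrix Collect_less_in_subset)

lemma submatrix_mult:
  assumes X: "X \<in> carrier_mat k m" and A: "A \<in> carrier_mat m n"
  shows "submatrix (X * A) I J = submatrix X I UNIV * submatrix A UNIV J"
proof (rule eq_matI)
  show "dim_row (submatrix (X * A) I J) = dim_row (submatrix X I UNIV * submatrix A UNIV J)"
    and "dim_col (submatrix (X * A) I J) = dim_col (submatrix X I UNIV * submatrix A UNIV J)"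
    using X A by (simp_all add: dim_submatrix)
  fix i j assume "i < dim_row (submatrix X I UNIV * submatrix A UNIV J)"
    and "j < dim_col (submatrix X I UNIV * submatrix A UNIV J)"
  then have i: "i < card {i. i < k \<and> i \<in> I}" and j: "j < card {j. j < n \<and> j \<in> J}"
    using X A by (simp_all add: dim_submatrix)
  have XI: "submatrix X I UNIV \<in> carrier_mat (card {i. i < k \<and> i \<in> I}) m"
    and AJ: "submatrix A UNIV J \<in> carrier_mat m (card {j. j < n \<and> j \<in> J})"
    using X A by (auto intro!: carrier_matI simp: dim_submatrix)
  have "submatrix (X * A) I J $$ (i, j) = (X * A) $$ (pick I i, pick J j)"
    using i j X A by (simp add: submatrix_index)
  also have "\<dots> = (\<Sum>l<m. X $$ (pick I i, l) * A $$ (l, pick J j))"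
    using index_mult_mat_sum[OF X A pick_le[OF i] pick_le[OF j]] .
  also have "\<dots> = (\<Sum>l<m. submatrix X I UNIV $$ (i, l) * submatrix A UNIV J $$ (l, j))"
    using i j X A by (intro sum.cong refl) (simp add: submatrix_index pick_UNIV)
  also have "\<dots> = (submatrix X I UNIV * submatrix A UNIV J) $$ (i, j)"
    by (rule index_mult_mat_sum[OF XI AJ i j, symmetric])
  finally show "submatrix (X * A) I J $$ (i, j) = (submatrix X I UNIV * submatrix A UNIV J) $$ (i, j)" .
qed

lemma submatrix_transpose: "submatrix A\<^sup>T I J = (submatrix A J I)\<^sup>T"
proof (rule eq_matI)
  fix i j assume "i < dim_row (submatrix A J I)\<^sup>T" and "j < dim_col (submatrix A J I)\<^sup>T"
  then have i: "i < card {a. a < dim_col A \<and> a \<in> I}" and j: "j < card {a. a < dim_row A \<and> a \<in> J}"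
    by (simp_all add: dim_submatrix)
  then show "submatrix A\<^sup>T I J $$ (i, j) = (submatrix A J I)\<^sup>T $$ (i, j)"
    by (simp add: submatrix_index pick_le dim_submatrix)
qed (simp_all add: dim_submatrix)

lemma minors_transpose: "minors A\<^sup>T r = minors A r"
proof -
  have e: "det (submatrix A\<^sup>T I J) = det (submatrix A J I)"
    if "I \<subseteq> {0..<dim_col A}" "J \<subseteq> {0..<dim_row A}" "card I = r" "card J = r" for I J
  proof -
    have "submatrix A J I \<in> carrier_mat r r"
      using submatrix_carrier[of A "dim_row A" "dim_col A" J I] that by auto
    then show ?thesis unfolding submatrix_transpose by (rule det_transpose)
  qed
  show ?thesis
  proof (intro equalityI subsetI)
    fix x assume "x \<in> minors A\<^sup>T r"
    then obtain I J where "x = det (submatrix A\<^sup>T I J)" "I \<subseteq> {0..<dim_col A}" "J \<subseteq> {0..<dim_row A}"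
      "card I = r" "card J = r"
      unfolding minors_def by auto
    then show "x \<in> minors A r" using e unfolding minors_def by auto
  next
    fix x assume "x \<in> minors A r"
    then obtain I J where IJ: "x = det (submatrix A J I)" "I \<subseteq> {0..<dim_col A}" "J \<subseteq> {0..<dim_row A}"
      "card I = r" "card J = r"
      unfolding minors_def by auto
    then have "x = det (submatrix A\<^sup>T I J)" using e by simp
    then show "x \<in> minors A\<^sup>T r" using IJ unfolding minors_def by auto
  qed
qed

text \<open>A square matrix built from rows of \<open>N\<close> is either singular or a row permutation of an
  \<open>r \<times> r\<close> row-submatrix of \<open>N\<close>.\<close>

lemma dvd_det_selected_rows:
  fixes N :: "int mat"
  assumes N: "N \<in> carrier_mat m r"
    and d: "\<And>K. K \<subseteq> {0..<m} \<Longrightarrow> card K = r \<Longrightarrow> d dvd det (submatrix N K UNIV)"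
    and f: "\<forall>i<r. f i < m"
  shows "d dvd det (mat\<^sub>r r r (\<lambda>i. row N (f i)))"
proof (cases "inj_on f {0..<r}")
  case False
  then obtain i j where ij: "i < r" "j < r" "i \<noteq> j" "f i = f j" unfolding inj_on_def by auto
  have "det (mat\<^sub>r r r (\<lambda>i. row N (f i))) = 0"
    by (rule det_identical_rows[OF _ ij(3) ij(1) ij(2)]) (use ij N in auto)
  then show ?thesis by simp
next
  case True
  define K where "K = f ` {0..<r}"
  have K: "K \<subseteq> {0..<m}" "card K = r" using f True by (auto simp: K_def card_image)
  define \<sigma> where "\<sigma> i = (if i < r then card {a\<in>K. a < f i} else i)" for i
  have pick: "pick K (\<sigma> i) = f i" if "i < r" for i
    using pick_card_in_set[of "f i" K] that by (auto simp: \<sigma>_def K_def)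
  have \<sigma>_less: "\<sigma> i < r" if i: "i < r" for i
  proof -
    have "{a\<in>K. a < f i} \<subset> K" using i by (auto simp: K_def)
    then show ?thesis using i K psubset_card_mono[of K] by (simp add: \<sigma>_def K_def)
  qed
  have inj: "inj_on \<sigma> {0..<r}"
  proof (rule inj_onI)
    fix x y assume "x \<in> {0..<r}" "y \<in> {0..<r}" "\<sigma> x = \<sigma> y"
    then show "x = y" using pick True by (metis atLeastLessThan_iff inj_on_contraD)
  qed
  have "\<sigma> ` {0..<r} = {0..<r}"
    by (rule endo_inj_surj) (use \<sigma>_less inj in auto)
  then have perm: "\<sigma> permutes {0..<r}"
    using inj by (intro bij_imp_permutes) (auto simp: bij_betw_def \<sigma>_def)
  have S: "submatrix N K UNIV \<in> carrier_mat r r"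
    using N K by (intro carrier_matI) (auto simp: dim_submatrix Collect_less_in_subset)
  have "mat\<^sub>r r r (\<lambda>i. row N (f i)) = mat r r (\<lambda>(i, j). submatrix N K UNIV $$ (\<sigma> i, j))"
  proof (rule eq_matI)
    fix i j assume "i < dim_row (mat r r (\<lambda>(i, j). submatrix N K UNIV $$ (\<sigma> i, j)))"
      and "j < dim_col (mat r r (\<lambda>(i, j). submatrix N K UNIV $$ (\<sigma> i, j)))"
    then have ij: "i < r" "j < r" by auto
    have "submatrix N K UNIV $$ (\<sigma> i, j) = N $$ (pick K (\<sigma> i), pick UNIV j)"
      by (rule submatrix_index) (use N K \<sigma>_less[OF ij(1)] ij in \<open>auto simp: Collect_less_in_subset\<close>)
    then show "mat\<^sub>r r r (\<lambda>i. row N (f i)) $$ (i, j) = mat r r (\<lambda>(i, j). submatrix N K UNIV $$ (\<sigma> i, j)) $$ (i, j)"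
      using ij N f pick[OF ij(1)] by (simp add: pick_UNIV)
  qed auto
  then have "det (mat\<^sub>r r r (\<lambda>i. row N (f i))) = signof \<sigma> * det (submatrix N K UNIV)"
    using det_permute_rows[OF S perm] by simp
  then show ?thesis using d[OF K] by simp
qed

text \<open>Every \<open>r \<times> r\<close> minor of \<open>X * A\<close> is, by multilinearity of the determinant in the rows, an
  integral combination of \<open>r \<times> r\<close> minors of \<open>A\<close>.\<close>

lemma minors_mult_left_dvd:
  fixes X A :: "int mat"
  assumes X: "X \<in> carrier_mat k m" and A: "A \<in> carrier_mat m n"
    and d: "\<forall>x \<in> minors A r. d dvd x" and y: "y \<in> minors (X * A) r"
  shows "d dvd y"
proof -
  obtain I J where IJ: "y = det (submatrix (X * A) I J)" "I \<subseteq> {0..<k}" "J \<subseteq> {0..<n}" "card I = r" "card J = r"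
    using y X A unfolding minors_def by auto
  define M where "M = submatrix X I UNIV"
  define N where "N = submatrix A UNIV J"
  have M: "M \<in> carrier_mat r m" unfolding M_def
    using X IJ by (intro carrier_matI) (auto simp: dim_submatrix Collect_less_in_subset)
  have N: "N \<in> carrier_mat m r" unfolding N_def
    using A IJ by (intro carrier_matI) (auto simp: dim_submatrix Collect_less_in_subset)
  have dN: "d dvd det (submatrix N K UNIV)" if K: "K \<subseteq> {0..<m}" "card K = r" for K
  proof -
    have "submatrix N K UNIV = submatrix A K J" unfolding N_def by (metis submatrix_split)
    moreover have "det (submatrix A K J) \<in> minors A r" unfolding minors_def using A K IJ by auto
    ultimately show ?thesis using d by simp
  qed
  let ?F = "{f. (\<forall>i\<in>{0..<r}. f i \<in> {0..<m}) \<and> (\<forall>i. i \<notin> {0..<r} \<longrightarrow> f i = i)}"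
  have "y = det (M * N)" unfolding IJ(1) M_def N_def using submatrix_mult[OF X A] by simp
  also have "\<dots> = (\<Sum>f\<in>?F. det (mat\<^sub>r r r (\<lambda>i. M $$ (i, f i) \<cdot>\<^sub>v row N (f i))))"
    unfolding mat_mul_finsum_alt[OF M N] by (rule det_linear_rows_sum) (use N in auto)
  also have "\<dots> = (\<Sum>f\<in>?F. prod (\<lambda>i. M $$ (i, f i)) {0..<r} * det (mat\<^sub>r r r (\<lambda>i. row N (f i))))"
    by (rule sum.cong[OF refl], rule det_rows_mul) (use N in auto)
  finally show ?thesis
    by (auto intro!: dvd_sum dvd_mult dvd_det_selected_rows[OF N dN])
qed

lemma minors_mult_right_dvd:
  fixes A Y :: "int mat"
  assumes A: "A \<in> carrier_mat m n" and Y: "Y \<in> carrier_mat n l"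
    and d: "\<forall>x \<in> minors A r. d dvd x" and y: "y \<in> minors (A * Y) r"
  shows "d dvd y"
proof -
  have "y \<in> minors (Y\<^sup>T * A\<^sup>T) r" using y minors_transpose[of "A * Y" r] transpose_mult[OF A Y] by simp
  moreover have "\<forall>x \<in> minors A\<^sup>T r. d dvd x" using d minors_transpose[of A r] by simp
  moreover have "Y\<^sup>T \<in> carrier_mat l n" "A\<^sup>T \<in> carrier_mat n m" using A Y by auto
  ultimately show ?thesis using minors_mult_left_dvd by blast
qed

lemma Gcd_minors_equivalent_dvd:
  assumes "equivalent_mat m n A D"
  shows "Gcd (minors A r) dvd Gcd (minors D r)"
proof -
  obtain P Q where PQ: "unimodular m P" "unimodular n Q" "D = P * A * Q" and A: "A \<in> carrier_mat m n"
    using assms unfolding equivalent_mat_def by auto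
  have P: "P \<in> carrier_mat m m" and Q: "Q \<in> carrier_mat n n" using PQ unfolding unimodular_def by auto
  have "\<forall>x \<in> minors (P * A) r. Gcd (minors A r) dvd x"
    using minors_mult_left_dvd[OF P A, of r "Gcd (minors A r)"] by (simp add: Gcd_dvd)
  then have "\<forall>y \<in> minors D r. Gcd (minors A r) dvd y"
    unfolding PQ(3) using minors_mult_right_dvd[OF mult_carrier_mat[OF P A] Q] by blast
  then show ?thesis by (simp add: Gcd_greatest)
qed

lemma Gcd_minors_equivalent: "equivalent_mat m n A D \<Longrightarrow> Gcd (minors A r) = Gcd (minors D r)"
  using Gcd_minors_equivalent_dvd equivalent_mat_sym
  by (metis zdvd_antisym_nonneg Gcd_int_greater_eq_0)

lemma pick_atLeastLessThan: "i < s \<Longrightarrow> pick {0..<s} i = i"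
  by (induction i) (auto intro!: Least_equality)

lemma prod_diagonal_in_minors:
  assumes D: "diagonal_form m n s D"
  shows "(\<Prod>i<s. D $$ (i, i)) \<in> minors D s"
proof -
  have Dc: "D \<in> carrier_mat m n" and off: "\<forall>i<m. \<forall>j<n. i \<noteq> j \<longrightarrow> D $$ (i, j) = 0"
    and s: "s \<le> min m n"
    using D unfolding diagonal_form_def by auto
  let ?S = "submatrix D {0..<s} {0..<s}"
  have S: "?S \<in> carrier_mat s s" using submatrix_carrier[OF Dc, of "{0..<s}" "{0..<s}"] s by simp
  have "card {i. i < m \<and> i \<in> {0..<s}} = s" "card {j. j < n \<and> j \<in> {0..<s}} = s"
    using s by (subst Collect_less_in_subset; auto)+
  then have S_index: "?S $$ (i, j) = D $$ (i, j)" if "i < s" "j < s" for i j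
    using that Dc submatrix_index[of i D "{0..<s}" j "{0..<s}"] by (simp add: pick_atLeastLessThan)
  have "det ?S = prod_list (diag_mat ?S)"
    by (rule det_upper_triangular[OF _ S]) (use S S_index off s in \<open>auto simp: upper_triangular_def\<close>)
  also have "diag_mat ?S = map (\<lambda>i. D $$ (i, i)) [0..<s]"
    unfolding diag_mat_def using S S_index by (intro map_cong) auto
  also have "prod_list (map (\<lambda>i. D $$ (i, i)) [0..<s]) = (\<Prod>i<s. D $$ (i, i))"
    by (simp add: prod.distinct_set_conv_list[symmetric] atLeast0LessThan)
  finally show ?thesis unfolding minors_def using Dc s by (intro CollectI exI[of _ "{0..<s}"]) auto
qed

text \<open>An \<open>s \<times> s\<close> minor of a diagonal matrix either uses a row beyond the first \<open>s\<close>, which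
  vanishes, or uses the first \<open>s\<close> rows, whose \<open>a\<close>-th row is a multiple of \<open>D $$ (a, a)\<close>.\<close>

lemma prod_diagonal_dvd_minors:
  assumes D: "diagonal_form m n s D" and x: "x \<in> minors D s"
  shows "(\<Prod>i<s. D $$ (i, i)) dvd x"
proof -
  have Dc: "D \<in> carrier_mat m n" and off: "\<forall>i<m. \<forall>j<n. i \<noteq> j \<longrightarrow> D $$ (i, j) = 0"
    and s: "s \<le> min m n" and zero: "\<forall>i. s \<le> i \<and> i < min m n \<longrightarrow> D $$ (i, i) = 0"
    using D unfolding diagonal_form_def by auto
  obtain I J where x: "x = det (submatrix D I J)" and IJ: "I \<subseteq> {0..<m}" "J \<subseteq> {0..<n}" "card I = s" "card J = s"
    using x Dc unfolding minors_def by auto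
  let ?S = "submatrix D I J"
  have S: "?S \<in> carrier_mat s s" using submatrix_carrier[OF Dc IJ(1,2)] IJ by simp
  have cI: "card {i. i < m \<and> i \<in> I} = s" and cJ: "card {j. j < n \<and> j \<in> J} = s"
    using IJ by (simp_all add: Collect_less_in_subset)
  have S_index: "?S $$ (a, b) = D $$ (pick I a, pick J b)" "pick I a < m" "pick J b < n"
    if "a < s" "b < s" for a b
    using submatrix_index[of a D I b J] that Dc cI cJ pick_le[of a m I] pick_le[of b n J] by auto
  have det_S: "det ?S = (\<Sum>p\<in>{p. p permutes {0..<s}}. signof p * (\<Prod>a = 0..<s. ?S $$ (a, p a)))"
    by (rule det_def'[OF S])
  show ?thesis
  proof (cases "I \<subseteq> {0..<s}")
    case True
    then have I: "I = {0..<s}" using IJ by (intro card_subset_eq) auto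
    have "D $$ (a, a) dvd ?S $$ (a, b)" if ab: "a < s" "b < s" for a b
      using S_index[OF ab] off ab s by (cases "pick J b = a") (auto simp: I pick_atLeastLessThan)
    then have "(\<Prod>a = 0..<s. D $$ (a, a)) dvd (\<Prod>a = 0..<s. ?S $$ (a, p a))" if "p permutes {0..<s}" for p
      using permutes_in_image[OF that] by (intro prod_dvd_prod) auto
    then show ?thesis unfolding x det_S by (auto simp: atLeast0LessThan intro!: dvd_sum dvd_mult)
  next
    case False
    then obtain i where i: "i \<in> I" "\<not> i < s" by (auto simp: subset_eq)
    define a where "a = card {y\<in>I. y < i}"
    have "{y\<in>I. y < i} \<subset> I" using i by auto
    moreover have "finite I" using IJ(1) finite_subset by blast
    ultimately have a: "a < s" unfolding a_def using psubset_card_mono IJ(3) by metis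
    have "pick I a = i" unfolding a_def by (rule pick_card_in_set[OF i(1)])
    then have row_zero: "?S $$ (a, b) = 0" if "b < s" for b
      using S_index[OF a that] off zero i by (cases "pick J b = i") auto
    have "(\<Prod>a = 0..<s. ?S $$ (a, p a)) = 0" if "p permutes {0..<s}" for p
      using a row_zero permutes_in_image[OF that, of a] by (intro prod_zero bexI[of _ a]) auto
    then have "det ?S = 0" unfolding det_S by (intro sum.neutral) auto
    then show ?thesis using x by simp
  qed
qed

lemma Gcd_minors_diagonal_form:
  assumes D: "diagonal_form m n s D"
  shows "Gcd (minors D s) = (\<Prod>i<s. D $$ (i, i))"
proof -
  have "(\<Prod>i<s. D $$ (i, i)) \<ge> 0"
    using D unfolding diagonal_form_def by (intro prod_nonneg) (auto simp: less_imp_le)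
  then show ?thesis
    using Gcd_dvd[OF prod_diagonal_in_minors[OF D]] prod_diagonal_dvd_minors[OF D]
    by (intro zdvd_antisym_nonneg) (auto simp: Gcd_int_greater_eq_0 intro: Gcd_greatest)
qed

section \<open>Rank\<close>

lemma real_mat_carrier [simp]: "real_mat A \<in> carrier_mat m n \<longleftrightarrow> A \<in> carrier_mat m n"
  unfolding real_mat_def carrier_mat_def by simp

lemma dim_real_mat [simp]: "dim_row (real_mat A) = dim_row A" "dim_col (real_mat A) = dim_col A"
  unfolding real_mat_def by simp_all

lemma index_real_mat [simp]:
  "i < dim_row A \<Longrightarrow> j < dim_col A \<Longrightarrow> real_mat A $$ (i, j) = real_of_int (A $$ (i, j))"
  unfolding real_mat_def by simp

lemma real_mat_mult:
  "A \<in> carrier_mat m k \<Longrightarrow> B \<in> carrier_mat k n \<Longrightarrow> real_mat (A * B) = real_mat A * real_mat B"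
  unfolding real_mat_def by (rule of_int_hom.mat_hom_mult)

lemma real_mat_one [simp]: "real_mat (1\<^sub>m n) = 1\<^sub>m n"
  unfolding real_mat_def by (rule of_int_hom.mat_hom_one)

lemma det_real_mat: "det (real_mat A) = real_of_int (det A)"
  unfolding real_mat_def by (rule of_int_hom.hom_det)

lemma submatrix_real_mat: "submatrix (real_mat A) I J = real_mat (submatrix A I J)"
  by (rule eq_matI) (auto simp: real_mat_def dim_submatrix submatrix_index pick_le)

lemma int_rank_ge_nonzero_minor:
  assumes A: "A \<in> carrier_mat m n" and x: "x \<in> minors A s" "x \<noteq> 0"
  shows "s \<le> int_rank A"
proof -
  obtain I J where IJ: "det (submatrix A I J) \<noteq> 0" "J \<subseteq> {0..<n}" "card J = s"
    using x A unfolding minors_def by auto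
  then have "det (submatrix (real_mat A) I J) \<noteq> 0" by (simp add: submatrix_real_mat det_real_mat)
  moreover have "real_mat A \<in> carrier_mat m n" using A by simp
  ultimately have "card {j. j < n \<and> j \<in> J} \<le> vec_space.rank m (real_mat A)"
    using vec_space.rank_gt_minor by blast
  then show ?thesis unfolding int_rank_def using A IJ by (simp add: Collect_less_in_subset)
qed

lemma rank_sum_products_le:
  fixes f g :: "nat \<Rightarrow> nat \<Rightarrow> real"
  shows "vec_space.rank m (mat m n (\<lambda>(i, j). \<Sum>k<t. f k i * g k j)) \<le> t"
proof (induction t)
  case 0
  have zero: "mat m n (\<lambda>(i, j). \<Sum>k<(0::nat). f k i * g k j) = 0\<^sub>m m n" by (rule eq_matI) auto
  show ?case unfolding zero vec_space.rank_0I by simp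
next
  case (Suc t)
  have split: "mat m n (\<lambda>(i, j). \<Sum>k<Suc t. f k i * g k j) =
     mat m n (\<lambda>(i, j). \<Sum>k<t. f k i * g k j) + mat m n (\<lambda>(i, j). f t i * g t j)"
    by (rule eq_matI) auto
  have "vec_space.rank m (mat m n (\<lambda>(i, j). \<Sum>k<Suc t. f k i * g k j)) \<le>
      vec_space.rank m (mat m n (\<lambda>(i, j). \<Sum>k<t. f k i * g k j))
      + vec_space.rank m (mat m n (\<lambda>(i, j). f t i * g t j))"
    unfolding split by (rule vec_space.rank_subadditive) auto
  moreover have "vec_space.rank m (mat m n (\<lambda>(i, j). f t i * g t j)) \<le> 1"
    by (rule vec_space.rank_le_1_product_entries[of _ m n "f t" "g t"]) auto
  ultimately show ?case using Suc.IH by simp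
qed

lemma index_mult_diagonal_form:
  assumes D: "diagonal_form m n s D" and P: "P \<in> carrier_mat m' m" and Q: "Q \<in> carrier_mat n n'"
    and i: "i < m'" and j: "j < n'"
  shows "(P * D * Q) $$ (i, j) = (\<Sum>k<s. P $$ (i, k) * D $$ (k, k) * Q $$ (k, j))"
proof -
  have Dc: "D \<in> carrier_mat m n" and off: "\<forall>i<m. \<forall>j<n. i \<noteq> j \<longrightarrow> D $$ (i, j) = 0"
    and s: "s \<le> min m n" and zero: "\<forall>i. s \<le> i \<and> i < min m n \<longrightarrow> D $$ (i, i) = 0"
    using D unfolding diagonal_form_def by auto
  have PD: "(P * D) $$ (i, k) = (if k < s then P $$ (i, k) * D $$ (k, k) else 0)" if k: "k < n" for k
  proof -
    have "(P * D) $$ (i, k) = (\<Sum>l<m. if l = k then P $$ (i, k) * D $$ (k, k) else 0)"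
      unfolding index_mult_mat_sum[OF P Dc i k] by (rule sum.cong) (use off k in auto)
    then show ?thesis using zero s k by auto
  qed
  have "(P * D * Q) $$ (i, j) = (\<Sum>k<n. (P * D) $$ (i, k) * Q $$ (k, j))"
    by (rule index_mult_mat_sum[OF mult_carrier_mat[OF P Dc] Q i j])
  also have "\<dots> = (\<Sum>k<n. if k < s then P $$ (i, k) * D $$ (k, k) * Q $$ (k, j) else 0)"
    by (rule sum.cong) (auto simp: PD)
  also have "\<dots> = (\<Sum>k\<in>{..<n} \<inter> {k. k < s}. P $$ (i, k) * D $$ (k, k) * Q $$ (k, j))"
    by (simp add: sum.inter_restrict)
  also have "{..<n} \<inter> {k. k < s} = {..<s}" using s by auto
  finally show ?thesis .
qed

lemma int_rank_diagonal_form: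
  assumes e: "equivalent_mat m n A D" and D: "diagonal_form m n s D"
  shows "int_rank A = s"
proof -
  have A: "A \<in> carrier_mat m n" using e unfolding equivalent_mat_def by auto
  have "Gcd (minors A s) = (\<Prod>i<s. D $$ (i, i))"
    using Gcd_minors_equivalent[OF e] Gcd_minors_diagonal_form[OF D] by simp
  also have "\<dots> \<noteq> 0" using D unfolding diagonal_form_def by (auto simp: prod_zero_iff)
  finally obtain x where "x \<in> minors A s" "x \<noteq> 0" using Gcd_0_iff by blast
  then have ge: "s \<le> int_rank A" using int_rank_ge_nonzero_minor[OF A] by blast
  obtain P Q P' Q' where "unimodular m P'" "unimodular n Q'" and A_eq: "A = P' * D * Q'"
    using equivalent_mat_inverse[OF e] by metis
  then have P': "P' \<in> carrier_mat m m" and Q': "Q' \<in> carrier_mat n n" unfolding unimodular_def by auto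
  define R where "R = mat m n (\<lambda>(i, j).
    \<Sum>k<s. real_of_int (P' $$ (i, k) * D $$ (k, k)) * real_of_int (Q' $$ (k, j)))"
  have "real_mat A = R"
  proof (rule eq_matI)
    fix i j assume "i < dim_row R" "j < dim_col R"
    then have ij: "i < m" "j < n" by (simp_all add: R_def)
    then show "real_mat A $$ (i, j) = R $$ (i, j)"
      using A index_mult_diagonal_form[OF D P' Q' ij, folded A_eq] by (simp add: R_def)
  qed (use A in \<open>simp_all add: R_def\<close>)
  then have "int_rank A \<le> s" unfolding int_rank_def R_def using A rank_sum_products_le by simp
  with ge show ?thesis by simp
qed

lemma Gcd_minors_int_rank_diagonal_form:
  assumes "equivalent_mat m n A D" "diagonal_form m n s D"
  shows "Gcd (minors A (int_rank A)) = (\<Prod>i<s. D $$ (i, i))"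
  using int_rank_diagonal_form[OF assms] Gcd_minors_equivalent[OF assms(1)] Gcd_minors_diagonal_form[OF assms(2)]
  by simp

section \<open>\<open>p\<close>-adic rationals\<close>

definition padic_vec :: "nat \<Rightarrow> real vec \<Rightarrow> bool" where
  "padic_vec p v \<longleftrightarrow> (\<forall>i<dim_vec v. padic_rat p (v $ i))"

definition padic_mat :: "nat \<Rightarrow> real mat \<Rightarrow> bool" where
  "padic_mat p M \<longleftrightarrow> (\<forall>i<dim_row M. \<forall>j<dim_col M. padic_rat p (M $$ (i, j)))"

lemma padic_mat_carrier_iff:
  "B \<in> carrier_mat n m \<Longrightarrow> padic_mat p B \<longleftrightarrow> (\<forall>i<n. \<forall>j<m. padic_rat p (B $$ (i, j)))"
  unfolding padic_mat_def by auto

lemma padic_rat_of_int: "padic_rat p (real_of_int a)"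
  unfolding padic_rat_def by (intro exI[of _ a] exI[of _ 0]) simp

lemma padic_rat_Ints: "x \<in> \<int> \<Longrightarrow> padic_rat p x"
  using padic_rat_of_int by (auto elim: Ints_cases)

lemma padic_rat_inverse_power: "padic_rat p (1 / real p ^ k)"
  unfolding padic_rat_def by (intro exI[of _ 1] exI[of _ k]) simp

lemma padic_rat_mult: "padic_rat p x \<Longrightarrow> padic_rat p y \<Longrightarrow> padic_rat p (x * y)"
  unfolding padic_rat_def by (metis of_int_mult power_add times_divide_times_eq of_nat_power)

lemma padic_mat_real_mat: "padic_mat p (real_mat A)"
  unfolding padic_mat_def using padic_rat_of_int by simp

lemma padic_vec_integral: "integral_vec z \<Longrightarrow> padic_vec p z"
  unfolding integral_vec_def padic_vec_def using padic_rat_Ints by auto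

context
  fixes p :: nat
  assumes p: "0 < p"
begin

lemma padic_rat_add: "padic_rat p x \<Longrightarrow> padic_rat p y \<Longrightarrow> padic_rat p (x + y)"
proof -
  assume "padic_rat p x" "padic_rat p y"
  then obtain a k b l where x: "x = of_int a / real p ^ k" and y: "y = of_int b / real p ^ l"
    unfolding padic_rat_def by auto
  have "x + y = of_int (a * int p ^ l + b * int p ^ k) / real p ^ (k + l)"
    unfolding x y using p by (simp add: field_simps power_add)
  then show ?thesis unfolding padic_rat_def by blast
qed

lemma padic_rat_sum: "(\<And>i. i \<in> S \<Longrightarrow> padic_rat p (f i)) \<Longrightarrow> padic_rat p (sum f S)"
  by (induction S rule: infinite_finite_induct) (auto simp: padic_rat_add padic_rat_of_int[of p 0, simplified])

lemma padic_vec_mult_mat_vec: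
  assumes "padic_mat p M" "padic_vec p v" "dim_col M = dim_vec v"
  shows "padic_vec p (M *\<^sub>v v)"
  using assms unfolding padic_vec_def padic_mat_def
  by (auto simp: scalar_prod_def intro!: padic_rat_sum padic_rat_mult)

lemma padic_mat_mult:
  assumes "padic_mat p M" "padic_mat p N" "dim_col M = dim_row N"
  shows "padic_mat p (M * N)"
  using assms unfolding padic_mat_def
  by (auto simp: scalar_prod_def intro!: padic_rat_sum padic_rat_mult)

lemma padic_rat_scalar_prod:
  assumes "padic_vec p v" "padic_vec p w" "dim_vec v = dim_vec w"
  shows "padic_rat p (v \<bullet> w)"
  using assms unfolding scalar_prod_def padic_vec_def by (auto intro!: padic_rat_sum padic_rat_mult)

end

lemma dvd_prime_power_int:
  assumes p: "prime p" and d: "(d::int) > 0" and dv: "d dvd int p ^ k"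
  shows "\<exists>j. d = int p ^ j"
proof -
  have "nat d dvd p ^ k" using d dv by (metis int_dvd_int_iff of_nat_power pos_int_cases nat_int)
  then obtain j where "nat d = p ^ j" using divides_primepow_nat[OF p] by auto
  then show ?thesis using d by (metis int_nat_eq less_imp_le of_nat_power)
qed

lemma padic_rat_inverse_imp_power:
  assumes p: "prime p" and d: "d > 0" and pd: "padic_rat p (1 / real_of_int d)"
  shows "\<exists>k. d = int p ^ k"
proof -
  obtain a k where "1 / real_of_int d = of_int a / real p ^ k" using pd unfolding padic_rat_def by auto
  then have "real p ^ k = of_int a * real_of_int d" using d p prime_gt_0_nat by (simp add: field_simps)
  then have "int p ^ k = a * d" by (metis of_int_eq_iff of_int_mult of_int_of_nat_eq of_int_power)
  then show ?thesis using dvd_prime_power_int[OF p d, of k] by simp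
qed

lemma prod_eq_prime_power_iff:
  fixes d :: "nat \<Rightarrow> int"
  assumes p: "prime p" and pos: "\<forall>i<s. d i > 0"
  shows "(\<exists>k. (\<Prod>i<s. d i) = int p ^ k) \<longleftrightarrow> (\<forall>i<s. \<exists>k. d i = int p ^ k)"
proof
  assume "\<exists>k. (\<Prod>i<s. d i) = int p ^ k"
  then obtain k where k: "(\<Prod>i<s. d i) = int p ^ k" by auto
  show "\<forall>i<s. \<exists>k. d i = int p ^ k"
  proof (intro allI impI)
    fix i assume "i < s"
    then have "d i dvd int p ^ k" unfolding k[symmetric] by (intro dvd_prodI) auto
    then show "\<exists>k. d i = int p ^ k" using dvd_prime_power_int[OF p] pos \<open>i < s\<close> by blast
  qed
next
  assume "\<forall>i<s. \<exists>k. d i = int p ^ k"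
  then show "\<exists>k. (\<Prod>i<s. d i) = int p ^ k"
  proof (induction s)
    case 0
    show ?case by (intro exI[of _ 0]) simp
  next
    case (Suc s)
    then obtain k j where "(\<Prod>i<s. d i) = int p ^ k" "d s = int p ^ j" by auto
    then show ?case by (intro exI[of _ "k + j"]) (simp add: power_add)
  qed
qed

section \<open>Generalized inverses\<close>

definition padic_col_generating :: "nat \<Rightarrow> real mat \<Rightarrow> bool" where
  "padic_col_generating p M \<longleftrightarrow> (\<forall>z \<in> carrier_vec (dim_row M).
     integral_vec z \<and> (\<exists>w \<in> carrier_vec (dim_col M). z = M *\<^sub>v w) \<longrightarrow>
     (\<exists>w \<in> carrier_vec (dim_col M). padic_vec p w \<and> z = M *\<^sub>v w))"

definition padic_integral_pairing :: "nat \<Rightarrow> real mat \<Rightarrow> bool" where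
  "padic_integral_pairing p M \<longleftrightarrow> (\<forall>x \<in> carrier_vec (dim_col M). \<forall>y \<in> carrier_vec (dim_row M).
     integral_vec (M\<^sup>T *\<^sub>v y) \<and> integral_vec (M *\<^sub>v x) \<longrightarrow> padic_rat p (y \<bullet> (M *\<^sub>v x)))"

definition padic_ginverse :: "nat \<Rightarrow> real mat \<Rightarrow> bool" where
  "padic_ginverse p M \<longleftrightarrow> (\<exists>B \<in> carrier_mat (dim_col M) (dim_row M). padic_mat p B \<and> M * B * M = M)"

lemma lin_comb_cols_real_mat:
  assumes A: "A \<in> carrier_mat m n"
  shows "lin_comb m (map (map_vec real_of_int) (cols A)) c = real_mat A *\<^sub>v vec n c"
proof (rule eq_vecI)
  fix j assume "j < dim_vec (real_mat A *\<^sub>v vec n c)"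
  then have j: "j < m" using A by simp
  then show "lin_comb m (map (map_vec real_of_int) (cols A)) c $ j = (real_mat A *\<^sub>v vec n c) $ j"
    using A by (simp add: lin_comb_def cols_def scalar_prod_def atLeast0LessThan mult.commute)
qed (use A in \<open>simp add: lin_comb_def\<close>)

lemma padic_generating_cols_iff:
  assumes A: "A \<in> carrier_mat m n"
  shows "padic_generating p m (map (map_vec real_of_int) (cols A)) \<longleftrightarrow> padic_col_generating p (real_mat A)"
proof -
  have vec_nth: "vec n (\<lambda>i. w $ i) = w" if "w \<in> carrier_vec n" for w :: "real vec"
    using that by (intro eq_vecI) auto
  have span: "(\<exists>c. z = lin_comb m (map (map_vec real_of_int) (cols A)) c) \<longleftrightarrow>
      (\<exists>w \<in> carrier_vec n. z = real_mat A *\<^sub>v w)" for z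
    unfolding lin_comb_cols_real_mat[OF A] by (metis vec_carrier vec_nth)
  have padic_span: "(\<exists>c. (\<forall>i<length (map (map_vec real_of_int) (cols A)). padic_rat p (c i))
        \<and> z = lin_comb m (map (map_vec real_of_int) (cols A)) c) \<longleftrightarrow>
      (\<exists>w \<in> carrier_vec n. padic_vec p w \<and> z = real_mat A *\<^sub>v w)" for z
  proof
    assume "\<exists>c. (\<forall>i<length (map (map_vec real_of_int) (cols A)). padic_rat p (c i))
        \<and> z = lin_comb m (map (map_vec real_of_int) (cols A)) c"
    then obtain c where "\<forall>i<n. padic_rat p (c i)" "z = real_mat A *\<^sub>v vec n c"
      using A unfolding lin_comb_cols_real_mat[OF A] by auto
    then show "\<exists>w \<in> carrier_vec n. padic_vec p w \<and> z = real_mat A *\<^sub>v w"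
      unfolding padic_vec_def by (intro bexI[of _ "vec n c"]) auto
  next
    assume "\<exists>w \<in> carrier_vec n. padic_vec p w \<and> z = real_mat A *\<^sub>v w"
    then obtain w where "w \<in> carrier_vec n" "padic_vec p w" "z = real_mat A *\<^sub>v w" by auto
    then show "\<exists>c. (\<forall>i<length (map (map_vec real_of_int) (cols A)). padic_rat p (c i))
        \<and> z = lin_comb m (map (map_vec real_of_int) (cols A)) c"
      unfolding lin_comb_cols_real_mat[OF A] padic_vec_def using A vec_nth
      by (intro exI[of _ "\<lambda>i. w $ i"]) auto
  qed
  show ?thesis
    unfolding padic_generating_def padic_col_generating_def span padic_span using A by simp
qed

lemma padic_generating_rows_iff:
  assumes A: "A \<in> carrier_mat m n"
  shows "padic_generating p n (map (map_vec real_of_int) (rows A)) \<longleftrightarrow> padic_col_generating p (real_mat A\<^sup>T)"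
  using padic_generating_cols_iff[of "A\<^sup>T" n m p] A by simp

lemma assoc_mult_mat_mat_vec:
  assumes "A \<in> carrier_mat m k" "B \<in> carrier_mat k l" "C \<in> carrier_mat l n" "v \<in> carrier_vec n"
  shows "(A * B * C) *\<^sub>v v = A *\<^sub>v (B *\<^sub>v (C *\<^sub>v v))"
proof -
  have "(A * B * C) *\<^sub>v v = (A * B) *\<^sub>v (C *\<^sub>v v)" using assms by (intro assoc_mult_mat_vec) auto
  also have "\<dots> = A *\<^sub>v (B *\<^sub>v (C *\<^sub>v v))" using assms by (intro assoc_mult_mat_vec) auto
  finally show ?thesis .
qed

lemma ginverse_mult_mat_vec:
  assumes M: "M \<in> carrier_mat m n" and B: "B \<in> carrier_mat n m" and MBM: "M * B * M = M"
    and w: "w \<in> carrier_vec n"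
  shows "M *\<^sub>v (B *\<^sub>v (M *\<^sub>v w)) = M *\<^sub>v w"
proof -
  have "M *\<^sub>v w = (M * B * M) *\<^sub>v w" unfolding MBM ..
  then show ?thesis using assoc_mult_mat_mat_vec[OF M B M w] by simp
qed

context
  fixes p :: nat
  assumes p: "0 < p"
begin

lemma padic_ginverse_imp_col_generating:
  assumes "padic_ginverse p M"
  shows "padic_col_generating p M"
  unfolding padic_col_generating_def
proof (intro ballI impI)
  obtain B where B: "B \<in> carrier_mat (dim_col M) (dim_row M)" "padic_mat p B" "M * B * M = M"
    using assms unfolding padic_ginverse_def by blast
  fix z assume z: "z \<in> carrier_vec (dim_row M)"
    and "integral_vec z \<and> (\<exists>w \<in> carrier_vec (dim_col M). z = M *\<^sub>v w)"
  then obtain w where "integral_vec z" "w \<in> carrier_vec (dim_col M)" "z = M *\<^sub>v w" by blast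
  then have "z = M *\<^sub>v (B *\<^sub>v z)" using ginverse_mult_mat_vec[OF carrier_matI B(1,3)] by simp
  moreover have "padic_vec p (B *\<^sub>v z)"
    using padic_vec_mult_mat_vec[OF p B(2) padic_vec_integral] \<open>integral_vec z\<close> B(1) z by auto
  moreover have "B *\<^sub>v z \<in> carrier_vec (dim_col M)" using B(1) z by simp
  ultimately show "\<exists>w \<in> carrier_vec (dim_col M). padic_vec p w \<and> z = M *\<^sub>v w" by blast
qed

text \<open>With \<open>M B M = M\<close>, the pairing \<open>y\<^sup>T M x\<close> factors as \<open>(M\<^sup>T y)\<^sup>T B (M x)\<close>.\<close>

lemma padic_ginverse_imp_integral_pairing:
  assumes "padic_ginverse p M"
  shows "padic_integral_pairing p M"
  unfolding padic_integral_pairing_def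
proof (intro ballI impI)
  obtain B where B: "B \<in> carrier_mat (dim_col M) (dim_row M)" "padic_mat p B" "M * B * M = M"
    using assms unfolding padic_ginverse_def by blast
  have M: "M \<in> carrier_mat (dim_row M) (dim_col M)" by auto
  fix x y assume x: "x \<in> carrier_vec (dim_col M)" and y: "y \<in> carrier_vec (dim_row M)"
    and int: "integral_vec (M\<^sup>T *\<^sub>v y) \<and> integral_vec (M *\<^sub>v x)"
  have "y \<bullet> (M *\<^sub>v x) = y \<bullet> (M *\<^sub>v (B *\<^sub>v (M *\<^sub>v x)))"
    using ginverse_mult_mat_vec[OF M B(1,3) x] by simp
  also have "\<dots> = (M\<^sup>T *\<^sub>v y) \<bullet> (B *\<^sub>v (M *\<^sub>v x))"
    using B(1) mult_mat_vec_carrier[OF M x] y by (intro transpose_vec_mult_scalar[OF M, symmetric]) auto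
  finally have pairing: "y \<bullet> (M *\<^sub>v x) = (M\<^sup>T *\<^sub>v y) \<bullet> (B *\<^sub>v (M *\<^sub>v x))" .
  have "padic_vec p (B *\<^sub>v (M *\<^sub>v x))"
    using padic_vec_mult_mat_vec[OF p B(2) padic_vec_integral] int B(1) by auto
  moreover have "padic_vec p (M\<^sup>T *\<^sub>v y)" using int padic_vec_integral by auto
  ultimately show "padic_rat p (y \<bullet> (M *\<^sub>v x))"
    unfolding pairing using B(1) by (intro padic_rat_scalar_prod[OF p]) auto
qed

end

section \<open>Integer matrices in diagonal form\<close>

lemma eq_matI_mult_vec:
  fixes X Y :: "'a :: comm_ring_1 mat"
  assumes X: "X \<in> carrier_mat m n" and Y: "Y \<in> carrier_mat m n"
    and XY: "\<And>v. v \<in> carrier_vec n \<Longrightarrow> X *\<^sub>v v = Y *\<^sub>v v"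
  shows "X = Y"
proof (rule eq_matI)
  fix i j assume ij: "i < dim_row Y" "j < dim_col Y"
  have "X $$ (i, j) = (X *\<^sub>v unit_vec n j) $ i" using X Y ij by simp
  also have "\<dots> = (Y *\<^sub>v unit_vec n j) $ i" using XY[of "unit_vec n j"] by simp
  also have "\<dots> = Y $$ (i, j)" using X Y ij by simp
  finally show "X $$ (i, j) = Y $$ (i, j)" .
qed (use X Y in auto)

locale diagonalization =
  fixes m n s :: nat and A D P Q P' Q' :: "int mat"
  assumes A: "A \<in> carrier_mat m n" and P: "P \<in> carrier_mat m m" and P': "P' \<in> carrier_mat m m"
    and Q: "Q \<in> carrier_mat n n" and Q': "Q' \<in> carrier_mat n n"
    and PP': "P * P' = 1\<^sub>m m" and Q'Q: "Q' * Q = 1\<^sub>m n"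
    and A_eq: "A = P' * D * Q'" and D: "diagonal_form m n s D"
begin

lemma D_carrier: "D \<in> carrier_mat m n"
  and s_le: "s \<le> min m n"
  and D_pos: "i < s \<Longrightarrow> D $$ (i, i) > 0"
  using D unfolding diagonal_form_def by auto

lemma real_mat_A: "real_mat A = real_mat P' * real_mat D * real_mat Q'"
  unfolding A_eq using P' D_carrier Q' by (simp add: real_mat_mult[of _ m n _ n] real_mat_mult[of _ m m _ n])

lemma P_mult_P':
  assumes v: "v \<in> carrier_vec m"
  shows "real_mat P *\<^sub>v (real_mat P' *\<^sub>v v) = v"
proof -
  have "real_mat P *\<^sub>v (real_mat P' *\<^sub>v v) = (real_mat P * real_mat P') *\<^sub>v v"
    by (rule assoc_mult_mat_vec[symmetric]) (use P P' v in auto)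
  also have "real_mat P * real_mat P' = 1\<^sub>m m" using real_mat_mult[OF P P'] PP' by simp
  finally show ?thesis using v by simp
qed

lemma Q'_mult_Q:
  assumes v: "v \<in> carrier_vec n"
  shows "real_mat Q' *\<^sub>v (real_mat Q *\<^sub>v v) = v"
proof -
  have "real_mat Q' *\<^sub>v (real_mat Q *\<^sub>v v) = (real_mat Q' * real_mat Q) *\<^sub>v v"
    by (rule assoc_mult_mat_vec[symmetric]) (use Q Q' v in auto)
  also have "real_mat Q' * real_mat Q = 1\<^sub>m n" using real_mat_mult[OF Q' Q] Q'Q by simp
  finally show ?thesis using v by simp
qed

lemma A_mult_vec: "w \<in> carrier_vec n \<Longrightarrow>
  real_mat A *\<^sub>v w = real_mat P' *\<^sub>v (real_mat D *\<^sub>v (real_mat Q' *\<^sub>v w))"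
  unfolding real_mat_A using P' D_carrier Q'
  by (simp add: assoc_mult_mat_vec[of _ m n _ n] assoc_mult_mat_vec[of _ m m _ n])

lemma P_mult_A: "w \<in> carrier_vec n \<Longrightarrow>
  real_mat P *\<^sub>v (real_mat A *\<^sub>v w) = real_mat D *\<^sub>v (real_mat Q' *\<^sub>v w)"
  using A_mult_vec P_mult_P' D_carrier Q' by simp

lemma A_mult_Q: "u \<in> carrier_vec n \<Longrightarrow>
  real_mat A *\<^sub>v (real_mat Q *\<^sub>v u) = real_mat P' *\<^sub>v (real_mat D *\<^sub>v u)"
  using A_mult_vec[of "real_mat Q *\<^sub>v u"] Q'_mult_Q Q by simp

lemma index_D_mult_vec:
  assumes u: "u \<in> carrier_vec n" and j: "j < m"
  shows "(real_mat D *\<^sub>v u) $ j = (if j < s then real_of_int (D $$ (j, j)) * u $ j else 0)"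
proof -
  have off: "\<forall>i<m. \<forall>k<n. i \<noteq> k \<longrightarrow> D $$ (i, k) = 0"
    and zero: "\<forall>i. s \<le> i \<and> i < min m n \<longrightarrow> D $$ (i, i) = 0"
    using D unfolding diagonal_form_def by auto
  have "(real_mat D *\<^sub>v u) $ j = (\<Sum>k\<in>{0..<n}. real_of_int (D $$ (j, k)) * u $ k)"
    using u j D_carrier by (simp add: scalar_prod_def)
  also have "\<dots> = (\<Sum>k\<in>{0..<n}. if k = j then real_of_int (D $$ (j, j)) * u $ j else 0)"
    by (rule sum.cong) (use off j in auto)
  also have "\<dots> = (if j < s then real_of_int (D $$ (j, j)) * u $ j else 0)"
    using zero s_le j by auto
  finally show ?thesis .
qed

text \<open>\<open>Q (e\<^sub>i / d\<^sub>i)\<close> is the test vector forcing \<open>1 / d\<^sub>i\<close> to be \<open>p\<close>-adic.\<close>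

lemma A_mult_scaled_unit:
  assumes i: "i < s"
  shows "real_mat A *\<^sub>v (real_mat Q *\<^sub>v ((1 / real_of_int (D $$ (i, i))) \<cdot>\<^sub>v unit_vec n i))
    = real_mat P' *\<^sub>v unit_vec m i"
proof -
  have "real_mat D *\<^sub>v ((1 / real_of_int (D $$ (i, i))) \<cdot>\<^sub>v unit_vec n i) = unit_vec m i"
  proof (rule eq_vecI)
    fix j assume "j < dim_vec (unit_vec m i)"
    then show "(real_mat D *\<^sub>v ((1 / real_of_int (D $$ (i, i))) \<cdot>\<^sub>v unit_vec n i)) $ j = unit_vec m i $ j"
      using index_D_mult_vec[of _ j] i s_le D_pos[OF i] by (cases "j = i") auto
  qed (use D_carrier in simp)
  then show ?thesis using A_mult_Q[of "(1 / real_of_int (D $$ (i, i))) \<cdot>\<^sub>v unit_vec n i"] by simp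
qed

lemma integral_P'_mult_unit: "i < m \<Longrightarrow> integral_vec (real_mat P' *\<^sub>v unit_vec m i)"
  unfolding integral_vec_def using P' by simp

lemma col_generating_imp_powers:
  assumes p: "prime p" and gen: "padic_col_generating p (real_mat A)" and i: "i < s"
  shows "\<exists>k. D $$ (i, i) = int p ^ k"
proof -
  have im: "i < m" "i < n" using i s_le by auto
  define d where "d = D $$ (i, i)"
  have d: "d > 0" using D_pos[OF i] by (simp add: d_def)
  define z where "z = real_mat P' *\<^sub>v unit_vec m i"
  have "z = real_mat A *\<^sub>v (real_mat Q *\<^sub>v ((1 / real_of_int d) \<cdot>\<^sub>v unit_vec n i))"
    using A_mult_scaled_unit[OF i] by (simp add: z_def d_def)
  moreover have "real_mat Q *\<^sub>v ((1 / real_of_int d) \<cdot>\<^sub>v unit_vec n i) \<in> carrier_vec n" using Q by simp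
  moreover have "z \<in> carrier_vec m" using P' by (simp add: z_def)
  moreover have "dim_row (real_mat A) = m" "dim_col (real_mat A) = n" using A by auto
  ultimately obtain w where w: "w \<in> carrier_vec n" "padic_vec p w" "z = real_mat A *\<^sub>v w"
    using gen integral_P'_mult_unit[OF im(1)] unfolding padic_col_generating_def z_def by blast
  have "real_mat D *\<^sub>v (real_mat Q' *\<^sub>v w) = unit_vec m i"
    using P_mult_A[OF w(1)] P_mult_P'[of "unit_vec m i"] w(3) unfolding z_def by simp
  then have "1 = real_of_int d * (real_mat Q' *\<^sub>v w) $ i"
    using index_D_mult_vec[of "real_mat Q' *\<^sub>v w" i] im i w(1) Q' by (simp add: d_def)
  then have "(real_mat Q' *\<^sub>v w) $ i = 1 / real_of_int d" using d by (simp add: field_simps)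
  moreover have "padic_vec p (real_mat Q' *\<^sub>v w)"
    using padic_vec_mult_mat_vec[OF prime_gt_0_nat[OF p] padic_mat_real_mat w(2)] Q' w(1) by simp
  ultimately have "padic_rat p (1 / real_of_int d)" using im Q' unfolding padic_vec_def by force
  then show ?thesis using padic_rat_inverse_imp_power[OF p d] by (simp add: d_def)
qed

lemma transpose_P_unit_scalar_prod:
  assumes v: "v \<in> carrier_vec m" and i: "i < m"
  shows "((real_mat P)\<^sup>T *\<^sub>v unit_vec m i) \<bullet> v = (real_mat P *\<^sub>v v) $ i"
proof -
  have RP: "real_mat P \<in> carrier_mat m m" using P by simp
  have "((real_mat P)\<^sup>T *\<^sub>v unit_vec m i) \<bullet> v = unit_vec m i \<bullet> (real_mat P *\<^sub>v v)"
    by (rule transpose_vec_mult_scalar[OF RP v]) simp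
  also have "\<dots> = (real_mat P *\<^sub>v v) $ i" using RP v i by (intro scalar_prod_left_unit) auto
  finally show ?thesis .
qed

lemma integral_transpose_A_mult_scaled_unit:
  assumes i: "i < s"
  shows "integral_vec ((real_mat A)\<^sup>T *\<^sub>v ((1 / real_of_int (D $$ (i, i))) \<cdot>\<^sub>v ((real_mat P)\<^sup>T *\<^sub>v unit_vec m i)))"
    (is "integral_vec ((real_mat A)\<^sup>T *\<^sub>v ?y)")
  unfolding integral_vec_def
proof (intro allI impI)
  have im: "i < m" "i < n" using i s_le by auto
  have RA: "real_mat A \<in> carrier_mat m n" using A by simp
  have y: "?y \<in> carrier_vec m" using P by simp
  fix j assume "j < dim_vec ((real_mat A)\<^sup>T *\<^sub>v ?y)"
  then have j: "j < n" using A by simp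
  have Aj: "real_mat A *\<^sub>v unit_vec n j \<in> carrier_vec m" using RA by simp
  have "((real_mat A)\<^sup>T *\<^sub>v ?y) $ j = ((real_mat A)\<^sup>T *\<^sub>v ?y) \<bullet> unit_vec n j"
    using RA y j by simp
  also have "\<dots> = ?y \<bullet> (real_mat A *\<^sub>v unit_vec n j)"
    by (rule transpose_vec_mult_scalar[OF RA unit_vec_carrier y])
  also have "\<dots> = (1 / real_of_int (D $$ (i, i))) * (((real_mat P)\<^sup>T *\<^sub>v unit_vec m i) \<bullet> (real_mat A *\<^sub>v unit_vec n j))"
    using Aj P by (intro smult_scalar_prod_distrib) auto
  also have "\<dots> = (1 / real_of_int (D $$ (i, i))) * (real_mat D *\<^sub>v (real_mat Q' *\<^sub>v unit_vec n j)) $ i"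
    using transpose_P_unit_scalar_prod[OF Aj im(1)] P_mult_A[of "unit_vec n j"] by simp
  also have "\<dots> = real_of_int (Q' $$ (i, j))"
    using index_D_mult_vec[of "real_mat Q' *\<^sub>v unit_vec n j" i] Q' im i j D_pos[OF i] by simp
  finally show "((real_mat A)\<^sup>T *\<^sub>v ?y) $ j \<in> \<int>" by simp
qed

lemma integral_pairing_imp_powers:
  assumes p: "prime p" and pairing: "padic_integral_pairing p (real_mat A)" and i: "i < s"
  shows "\<exists>k. D $$ (i, i) = int p ^ k"
proof -
  have im: "i < m" using i s_le by auto
  define d where "d = D $$ (i, i)"
  have d: "d > 0" using D_pos[OF i] by (simp add: d_def)
  define x where "x = real_mat Q *\<^sub>v ((1 / real_of_int d) \<cdot>\<^sub>v unit_vec n i)"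
  define y where "y = (1 / real_of_int d) \<cdot>\<^sub>v ((real_mat P)\<^sup>T *\<^sub>v unit_vec m i)"
  have xy: "x \<in> carrier_vec n" "y \<in> carrier_vec m" using P Q by (simp_all add: x_def y_def)
  have Ax: "real_mat A *\<^sub>v x = real_mat P' *\<^sub>v unit_vec m i"
    using A_mult_scaled_unit[OF i] by (simp add: x_def d_def)
  have "y \<bullet> (real_mat A *\<^sub>v x) = (1 / real_of_int d) * (real_mat P *\<^sub>v (real_mat P' *\<^sub>v unit_vec m i)) $ i"
    unfolding Ax y_def using P P' transpose_P_unit_scalar_prod[OF _ im, of "real_mat P' *\<^sub>v unit_vec m i"] by simp
  also have "\<dots> = 1 / real_of_int d" using P_mult_P'[of "unit_vec m i"] im by simp
  finally have "y \<bullet> (real_mat A *\<^sub>v x) = 1 / real_of_int d" .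
  moreover have "integral_vec (real_mat A *\<^sub>v x)" unfolding Ax using integral_P'_mult_unit[OF im] .
  moreover have "integral_vec ((real_mat A)\<^sup>T *\<^sub>v y)"
    using integral_transpose_A_mult_scaled_unit[OF i] by (simp add: y_def d_def)
  moreover have "dim_col (real_mat A) = n" "dim_row (real_mat A) = m" using A by auto
  ultimately have "padic_rat p (1 / real_of_int d)"
    using pairing xy unfolding padic_integral_pairing_def by metis
  then show ?thesis using padic_rat_inverse_imp_power[OF p d] by (simp add: d_def)
qed

definition D_pinv :: "real mat" where
  "D_pinv = mat n m (\<lambda>(i, j). if i = j \<and> i < s then 1 / real_of_int (D $$ (i, i)) else 0)"

lemma D_pinv_carrier: "D_pinv \<in> carrier_mat n m"
  unfolding D_pinv_def by simp

lemma index_D_pinv_mult_vec: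
  assumes w: "w \<in> carrier_vec m" and k: "k < n"
  shows "(D_pinv *\<^sub>v w) $ k = (if k < s then w $ k / real_of_int (D $$ (k, k)) else 0)"
proof -
  have "(D_pinv *\<^sub>v w) $ k = (\<Sum>j\<in>{0..<m}. D_pinv $$ (k, j) * w $ j)"
    using w k D_pinv_carrier by (simp add: scalar_prod_def)
  also have "\<dots> = (\<Sum>j\<in>{0..<m}. if j = k then (if k < s then w $ k / real_of_int (D $$ (k, k)) else 0) else 0)"
    by (rule sum.cong) (auto simp: D_pinv_def k)
  also have "\<dots> = (if k < s then w $ k / real_of_int (D $$ (k, k)) else 0)" using s_le k by auto
  finally show ?thesis .
qed

lemma D_D_pinv_D:
  assumes u: "u \<in> carrier_vec n"
  shows "real_mat D *\<^sub>v (D_pinv *\<^sub>v (real_mat D *\<^sub>v u)) = real_mat D *\<^sub>v u"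
proof (rule eq_vecI)
  have Du: "real_mat D *\<^sub>v u \<in> carrier_vec m" using D_carrier u by simp
  have "D_pinv *\<^sub>v (real_mat D *\<^sub>v u) \<in> carrier_vec n" using D_pinv_carrier Du by simp
  moreover fix j assume "j < dim_vec (real_mat D *\<^sub>v u)"
  then have j: "j < m" using D_carrier by simp
  ultimately show "(real_mat D *\<^sub>v (D_pinv *\<^sub>v (real_mat D *\<^sub>v u))) $ j = (real_mat D *\<^sub>v u) $ j"
    using index_D_mult_vec[OF _ j] index_D_pinv_mult_vec[OF Du] u D_pos s_le j by auto
qed simp

lemma powers_imp_padic_ginverse:
  assumes p: "0 < p" and powers: "\<forall>i<s. \<exists>k. D $$ (i, i) = int p ^ k"
  shows "padic_ginverse p (real_mat A)"
proof -
  define B where "B = real_mat Q * D_pinv * real_mat P"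
  have RQ: "real_mat Q \<in> carrier_mat n n" and RP: "real_mat P \<in> carrier_mat m m"
    and RA: "real_mat A \<in> carrier_mat m n" using Q P A by simp_all
  have B: "B \<in> carrier_mat n m" unfolding B_def using RQ D_pinv_carrier RP by simp
  have "padic_mat p D_pinv"
    unfolding padic_mat_def D_pinv_def using powers padic_rat_inverse_power padic_rat_of_int[of p 0]
    by auto
  then have "padic_mat p B" unfolding B_def
    using RQ RP D_pinv_carrier
    by (intro padic_mat_mult[OF p] padic_mat_real_mat) auto
  moreover have "real_mat A * B * real_mat A = real_mat A"
  proof (rule eq_matI_mult_vec[OF _ RA])
    show "real_mat A * B * real_mat A \<in> carrier_mat m n" using RA B by simp
    fix v :: "real vec" assume v: "v \<in> carrier_vec n"
    have "(real_mat A * B * real_mat A) *\<^sub>v v = real_mat A *\<^sub>v (B *\<^sub>v (real_mat A *\<^sub>v v))"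
      by (rule assoc_mult_mat_mat_vec[OF RA B RA v])
    also have "\<dots> = real_mat A *\<^sub>v (real_mat Q *\<^sub>v (D_pinv *\<^sub>v (real_mat P *\<^sub>v (real_mat A *\<^sub>v v))))"
      unfolding B_def using RA v assoc_mult_mat_mat_vec[OF RQ D_pinv_carrier RP, of "real_mat A *\<^sub>v v"] by simp
    also have "\<dots> = real_mat P' *\<^sub>v (real_mat D *\<^sub>v (D_pinv *\<^sub>v (real_mat P *\<^sub>v (real_mat A *\<^sub>v v))))"
      using D_pinv_carrier by (intro A_mult_Q) (simp add: carrier_dim_vec)
    also have "\<dots> = real_mat P' *\<^sub>v (real_mat D *\<^sub>v (D_pinv *\<^sub>v (real_mat D *\<^sub>v (real_mat Q' *\<^sub>v v))))"
      using P_mult_A[OF v] by simp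
    also have "\<dots> = real_mat A *\<^sub>v v"
      using D_D_pinv_D A_mult_vec Q' v by simp
    finally show "(real_mat A * B * real_mat A) *\<^sub>v v = real_mat A *\<^sub>v v" .
  qed
  ultimately show ?thesis unfolding padic_ginverse_def using B A by auto
qed

end

lemma padic_iff_diagonal_powers:
  assumes e: "equivalent_mat m n A D" and D: "diagonal_form m n s D" and p: "prime p"
  shows "padic_col_generating p (real_mat A) \<longleftrightarrow> (\<forall>i<s. \<exists>k. D $$ (i, i) = int p ^ k)"
    and "padic_integral_pairing p (real_mat A) \<longleftrightarrow> (\<forall>i<s. \<exists>k. D $$ (i, i) = int p ^ k)"
    and "padic_ginverse p (real_mat A) \<longleftrightarrow> (\<forall>i<s. \<exists>k. D $$ (i, i) = int p ^ k)"
proof -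
  obtain P Q P' Q' where PQ: "unimodular m P" "unimodular n Q" "unimodular m P'" "unimodular n Q'"
    "D = P * A * Q" "A = P' * D * Q'" "P * P' = 1\<^sub>m m" "Q' * Q = 1\<^sub>m n"
    by (rule equivalent_mat_inverse[OF e])
  interpret diagonalization m n s A D P Q P' Q'
    using PQ e D unfolding unimodular_def equivalent_mat_def by unfold_locales auto
  have p0: "0 < p" using p prime_gt_0_nat by blast
  show "padic_col_generating p (real_mat A) \<longleftrightarrow> (\<forall>i<s. \<exists>k. D $$ (i, i) = int p ^ k)"
    using col_generating_imp_powers[OF p] powers_imp_padic_ginverse[OF p0]
      padic_ginverse_imp_col_generating[OF p0] by blast
  show "padic_integral_pairing p (real_mat A) \<longleftrightarrow> (\<forall>i<s. \<exists>k. D $$ (i, i) = int p ^ k)"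
    using integral_pairing_imp_powers[OF p] powers_imp_padic_ginverse[OF p0]
      padic_ginverse_imp_integral_pairing[OF p0] by blast
  show "padic_ginverse p (real_mat A) \<longleftrightarrow> (\<forall>i<s. \<exists>k. D $$ (i, i) = int p ^ k)"
    using col_generating_imp_powers[OF p] powers_imp_padic_ginverse[OF p0]
      padic_ginverse_imp_col_generating[OF p0] by blast
qed

theorem theorem1p3:
  fixes A :: "int mat" and m n r p :: nat
  assumes "A \<in> carrier_mat m n"
    and "int_rank A = r"
    and "prime p"
  defines "P1 \<equiv> padic_generating p m (map (map_vec real_of_int) (cols A))"
    and "P2 \<equiv> padic_generating p n (map (map_vec real_of_int) (rows A))"
    and "P3 \<equiv> (\<forall>x \<in> carrier_vec n. \<forall>y \<in> carrier_vec m.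
                 integral_vec (transpose_mat (real_mat A) *\<^sub>v y) \<and> integral_vec (real_mat A *\<^sub>v x)
                 \<longrightarrow> padic_rat p (y \<bullet> (real_mat A *\<^sub>v x)))"
    and "P4 \<equiv> (\<forall>d \<in> set (elementary_divisors A). \<exists>k. d = int p ^ k)"
    and "P5 \<equiv> (\<exists>k. Gcd (minors A r) = int p ^ k)"
    and "P6 \<equiv> (\<exists>B \<in> carrier_mat n m. (\<forall>i < n. \<forall>j < m. padic_rat p (B $$ (i, j)))
                 \<and> real_mat A * B * real_mat A = real_mat A)"
  shows "(P1 \<longleftrightarrow> P2) \<and> (P1 \<longleftrightarrow> P3) \<and> (P1 \<longleftrightarrow> P4) \<and> (P1 \<longleftrightarrow> P5) \<and> (P1 \<longleftrightarrow> P6)"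
proof -
  note A = assms(1) and p = assms(3)
  obtain D s where AD: "equivalent_mat m n A D" "diagonal_form m n s D"
    and divisors: "set (elementary_divisors A) = {D $$ (i, i) | i. i < s}"
    using elementary_divisors_diagonal_form[OF A] by blast
  let ?powers = "\<forall>i<s. \<exists>k. D $$ (i, i) = int p ^ k"
  have dims: "dim_row A = m" "dim_col A = n" using A by auto
  note padic = padic_iff_diagonal_powers[OF AD p]
  have "P1 \<longleftrightarrow> ?powers" unfolding P1_def padic_generating_cols_iff[OF A] by (rule padic(1))
  moreover have "P2 \<longleftrightarrow> ?powers"
    unfolding P2_def padic_generating_rows_iff[OF A]
      padic_iff_diagonal_powers(1)[OF equivalent_mat_transpose[OF AD(1)] diagonal_form_transpose[OF AD(2)] p]
    using AD(2) unfolding diagonal_form_def by auto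
  moreover have "P3 \<longleftrightarrow> ?powers"
    using padic(2) unfolding P3_def padic_integral_pairing_def dim_real_mat dims .
  moreover have "P4 \<longleftrightarrow> ?powers" unfolding P4_def divisors by auto
  moreover have "P5 \<longleftrightarrow> ?powers"
    unfolding P5_def assms(2)[symmetric] Gcd_minors_int_rank_diagonal_form[OF AD]
    using prod_eq_prime_power_iff[OF p] AD(2) by (simp add: diagonal_form_def)
  moreover have "P6 \<longleftrightarrow> ?powers"
    unfolding P6_def padic(3)[symmetric] padic_ginverse_def dim_real_mat dims
    by (rule bex_cong[OF refl]) (simp add: padic_mat_carrier_iff)
  ultimately show ?thesis by simp
qed

end
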